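(* Let $A=\{a_{ij}: i\ne j,\ i,j\ge1\}$ with $a_{ij}\prec a_{kl}$ iff $j=k$. For $f:[n]\to[n]$, a word $w=w_1\cdots w_n$ over $A$ is $f$-compatible if $w_{f(j)}\prec w_j$ for every $j\in[n]$ with $f(j)\neq j$; let $\mathbf S^f(A)$ be the sum of all $f$-compatible words. Then: (i) the $\mathbf S^f$, $f$ ranging over all endofunctions of all $[n]$, $n\ge0$, are linearly independent; (ii) $\mathbf S^f\mathbf S^g=\mathbf S^{f\bullet g}$, so their span $\mathbf{EFSym}$ is a subalgebra of $\mathbb K\langle\langle A\rangle\rangle$; (iii) letting letters of $A$ commute with those of $B$, $$\mathbf S^f(A\oplus B)=\sum_{I\models f}\mathbf S^{\mathrm{std}(f^{[n]\setminus I})}(A)\,\mathbf S^{\mathrm{std}(f^I)}(B);$$ (iv) with the coproduct $\Delta\mathbf S^f=\sum_{I\models f}\mathbf S^{\mathrm{std}(f^{[n]\setminus I})}\otimes\mathbf S^{\mathrm{std}(f^I)}$ (i.e. $\Delta F=F(A\oplus B)$), $\mathbf{EFSym}$ is a graded (non-cocommutative) Hopf algebra.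
   Context: For $f:[n]\to[n]$ and $g:[m]\to[m]$, $f\bullet g:[n+m]\to[n+m]$ is the shifted concatenation: $(f\bullet g)(i)=f(i)$ for $i\le n$ and $(f\bullet g)(n+i)=g(i)+n$. For $I\subseteq[n]$, $f^I:I\to I$ is defined by $f^I(x)=f(x)$ if $f(x)\in I$ and $f^I(x)=x$ otherwise; if $|I|=k$ and $\tau_I:I\to[k]$ is the increasing bijection, $\mathrm{std}(f^I)=\tau_I\circ f^I\circ\tau_I^{-1}$. $I$ is an ideal of $f$, written $I\models f$, if $f^{-1}(I)\subseteq I$. $B=\{b_{ij}:i\neq j\}$ is a disjoint copy of $A$ with the same relation; $A\oplus B$ is the disjoint union with the relations on $A$ and on $B$ plus $a\prec b$ for all $a\in A,b\in B$ (never $b\prec a$); $\mathbf S^f(A\oplus B)$ is the sum of $f$-compatible words over $A\oplus B$. $\mathbf S^{\emptyset}=1$ for the empty function. *)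

theory Defs
  imports Main
begin

text \<open>An endofunction f of [n] = {1..n} is encoded as the list fs of length n with
  f(i) = fs ! (i - 1).  The empty list is the empty function.\<close>

definition is_endo :: "nat list \<Rightarrow> bool" where
  "is_endo fs \<longleftrightarrow> (\<forall>x\<in>set fs. 1 \<le> x \<and> x \<le> length fs)"

definition ap :: "nat list \<Rightarrow> nat \<Rightarrow> nat" where
  "ap fs i = fs ! (i - 1)"

definition shcat :: "nat list \<Rightarrow> nat list \<Rightarrow> nat list" where
  "shcat fs gs = fs @ map (\<lambda>x. x + length fs) gs"

definition restr :: "nat list \<Rightarrow> nat set \<Rightarrow> nat \<Rightarrow> nat" where
  "restr fs I x = (if ap fs x \<in> I then ap fs x else x)"

text \<open>std(f^I) = tau_I o f^I o tau_I^{-1}, where tau_I x = card {y \<in> I. y \<le> x} and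
  tau_I^{-1}(i) is the i-th smallest element of I.\<close>
definition stdr :: "nat list \<Rightarrow> nat set \<Rightarrow> nat list" where
  "stdr fs I = map (\<lambda>x. card {y\<in>I. y \<le> restr fs I x}) (sorted_list_of_set I)"

definition is_ideal :: "nat list \<Rightarrow> nat set \<Rightarrow> bool" where
  "is_ideal fs I \<longleftrightarrow> I \<subseteq> {1..length fs} \<and> (\<forall>j\<in>{1..length fs}. ap fs j \<in> I \<longrightarrow> j \<in> I)"

definition compat :: "('l \<Rightarrow> 'l \<Rightarrow> bool) \<Rightarrow> nat list \<Rightarrow> 'l list \<Rightarrow> bool" where
  "compat prec fs w \<longleftrightarrow> length w = length fs \<and>
     (\<forall>j\<in>{1..length fs}. ap fs j \<noteq> j \<longrightarrow> prec (w ! (ap fs j - 1)) (w ! (j - 1)))"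

text \<open>Sum of all f-compatible words over the alphabet {x. valid x}, as a formal series
  (function from words to coefficients).\<close>
definition Sgen :: "('l \<Rightarrow> bool) \<Rightarrow> ('l \<Rightarrow> 'l \<Rightarrow> bool) \<Rightarrow> nat list \<Rightarrow> 'l list \<Rightarrow> 'k::field" where
  "Sgen valid prec fs w = (if (\<forall>x\<in>set w. valid x) \<and> compat prec fs w then 1 else 0)"

type_synonym letter = "nat \<times> nat"

text \<open>A = {a_ij : i \<noteq> j, i,j \<ge> 1}, a_ij encoded as (i,j); a_ij \<prec> a_kl iff j = k.\<close>
definition validA :: "letter \<Rightarrow> bool" where
  "validA a \<longleftrightarrow> fst a \<noteq> snd a \<and> 1 \<le> fst a \<and> 1 \<le> snd a"

definition precA :: "letter \<Rightarrow> letter \<Rightarrow> bool" where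
  "precA a b \<longleftrightarrow> snd a = fst b"

text \<open>A \<oplus> B: Inl = letters of A, Inr = letters of the copy B.\<close>
fun validAB :: "letter + letter \<Rightarrow> bool" where
  "validAB (Inl a) = validA a"
| "validAB (Inr b) = validA b"

fun precAB :: "letter + letter \<Rightarrow> letter + letter \<Rightarrow> bool" where
  "precAB (Inl a) (Inl b) = precA a b"
| "precAB (Inr a) (Inr b) = precA a b"
| "precAB (Inl a) (Inr b) = True"
| "precAB (Inr a) (Inl b) = False"

abbreviation SA :: "nat list \<Rightarrow> letter list \<Rightarrow> 'k::field" where
  "SA \<equiv> Sgen validA precA"

abbreviation SAB :: "nat list \<Rightarrow> (letter + letter) list \<Rightarrow> 'k::field" where
  "SAB \<equiv> Sgen validAB precAB"

definition series_mult :: "('l list \<Rightarrow> 'k::field) \<Rightarrow> ('l list \<Rightarrow> 'k) \<Rightarrow> 'l list \<Rightarrow> 'k" where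
  "series_mult u v w = (\<Sum>k\<le>length w. u (take k w) * v (drop k w))"

definition series_one :: "'l list \<Rightarrow> 'k::field" where
  "series_one w = (if w = [] then 1 else 0)"

definition EFSym :: "(letter list \<Rightarrow> 'k::field) set" where
  "EFSym = {F. \<exists>c :: nat list \<Rightarrow> 'k. finite {f. c f \<noteq> 0} \<and> (\<forall>f. c f \<noteq> 0 \<longrightarrow> is_endo f) \<and>
              F = (\<lambda>w. \<Sum>f\<in>{f. c f \<noteq> 0}. c f * SA f w)}"

text \<open>Vectors of the free vector space with basis 'b are finitely supported functions
  'b \<Rightarrow> 'k; linear maps are given by matrices M :: 'a \<Rightarrow> ('b \<Rightarrow> 'k) (image of each basis
  vector); the tensor product of free spaces has basis 'a \<times> 'b.\<close>

definition supp :: "('a \<Rightarrow> 'k::zero) \<Rightarrow> 'a set" where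
  "supp v = {x. v x \<noteq> 0}"

definition bvec :: "'a \<Rightarrow> 'a \<Rightarrow> 'k::{zero,one}" where
  "bvec x = (\<lambda>y. if y = x then 1 else 0)"

definition lext :: "('a \<Rightarrow> 'b \<Rightarrow> 'k::field) \<Rightarrow> ('a \<Rightarrow> 'k) \<Rightarrow> 'b \<Rightarrow> 'k" where
  "lext M v = (\<lambda>y. \<Sum>x\<in>supp v. v x * M x y)"

definition lfun :: "('a \<Rightarrow> 'k::field) \<Rightarrow> ('a \<Rightarrow> 'k) \<Rightarrow> 'k" where
  "lfun phi v = (\<Sum>x\<in>supp v. v x * phi x)"

definition tens :: "('a \<Rightarrow> 'k::field) \<Rightarrow> ('b \<Rightarrow> 'k) \<Rightarrow> 'a \<times> 'b \<Rightarrow> 'k" where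
  "tens u v = (\<lambda>(x, y). u x * v y)"

definition tmat :: "('a \<Rightarrow> 'c \<Rightarrow> 'k::field) \<Rightarrow> ('b \<Rightarrow> 'd \<Rightarrow> 'k) \<Rightarrow> 'a \<times> 'b \<Rightarrow> 'c \<times> 'd \<Rightarrow> 'k" where
  "tmat M N = (\<lambda>(a, b). tens (M a) (N b))"

text \<open>Hopf algebra axioms (on basis elements; the maps are the linear extensions):
  product mu, unit one, coproduct Delta, counit eps, antipode S.\<close>
definition hopf_sc :: "('b \<times> 'b \<Rightarrow> 'b \<Rightarrow> 'k::field) \<Rightarrow> ('b \<Rightarrow> 'k) \<Rightarrow> ('b \<Rightarrow> 'b \<times> 'b \<Rightarrow> 'k)
    \<Rightarrow> ('b \<Rightarrow> 'k) \<Rightarrow> ('b \<Rightarrow> 'b \<Rightarrow> 'k) \<Rightarrow> bool" where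
  "hopf_sc mu one Delta eps S \<longleftrightarrow>
     (\<forall>p. finite (supp (mu p))) \<and> finite (supp one) \<and> (\<forall>x. finite (supp (Delta x))) \<and>
     (\<forall>x. finite (supp (S x))) \<and>
     \<comment> \<open>associativity and unit\<close>
     (\<forall>x y z. lext mu (tens (mu (x, y)) (bvec z)) = lext mu (tens (bvec x) (mu (y, z)))) \<and>
     (\<forall>x. lext mu (tens one (bvec x)) = bvec x \<and> lext mu (tens (bvec x) one) = bvec x) \<and>
     \<comment> \<open>coassociativity and counit\<close>
     (\<forall>x. lext (tmat Delta bvec) (Delta x) =
            (\<lambda>((a, b), c). lext (tmat bvec Delta) (Delta x) (a, (b, c)))) \<and>
     (\<forall>x. lext (\<lambda>(a, b). (\<lambda>y. eps a * bvec b y)) (Delta x) = bvec x \<and>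
          lext (\<lambda>(a, b). (\<lambda>y. bvec a y * eps b)) (Delta x) = bvec x) \<and>
     \<comment> \<open>Delta and eps are algebra morphisms\<close>
     (\<forall>x y. lext Delta (mu (x, y)) =
            lext (\<lambda>((a1, a2), (b1, b2)). tens (mu (a1, b1)) (mu (a2, b2))) (tens (Delta x) (Delta y))) \<and>
     lext Delta one = tens one one \<and>
     (\<forall>x y. lfun eps (mu (x, y)) = eps x * eps y) \<and> lfun eps one = 1 \<and>
     \<comment> \<open>antipode\<close>
     (\<forall>x. lext mu (lext (tmat S bvec) (Delta x)) = (\<lambda>y. eps x * one y) \<and>
          lext mu (lext (tmat bvec S) (Delta x)) = (\<lambda>y. eps x * one y))"

definition graded_sc :: "('b \<Rightarrow> nat) \<Rightarrow> ('b \<times> 'b \<Rightarrow> 'b \<Rightarrow> 'k::field) \<Rightarrow> ('b \<Rightarrow> 'k)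
    \<Rightarrow> ('b \<Rightarrow> 'b \<times> 'b \<Rightarrow> 'k) \<Rightarrow> ('b \<Rightarrow> 'k) \<Rightarrow> bool" where
  "graded_sc deg mu one Delta eps \<longleftrightarrow>
     (\<forall>x y. supp (mu (x, y)) \<subseteq> {z. deg z = deg x + deg y}) \<and>
     supp one \<subseteq> {z. deg z = 0} \<and>
     (\<forall>x. supp (Delta x) \<subseteq> {(a, b). deg a + deg b = deg x}) \<and>
     (\<forall>x. eps x \<noteq> 0 \<longrightarrow> deg x = 0)"

typedef endo = "{fs. is_endo fs}" morphisms rep_endo abs_endo
  by (rule exI[of _ "[]"]) (simp add: is_endo_def)

definition efmu :: "endo \<times> endo \<Rightarrow> endo \<Rightarrow> 'k::field" where
  "efmu = (\<lambda>(f, g). bvec (abs_endo (shcat (rep_endo f) (rep_endo g))))"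

definition efone :: "endo \<Rightarrow> 'k::field" where
  "efone = bvec (abs_endo [])"

definition efDelta :: "endo \<Rightarrow> endo \<times> endo \<Rightarrow> 'k::field" where
  "efDelta f = (\<lambda>(g, h). of_nat (card {I. is_ideal (rep_endo f) I \<and>
       stdr (rep_endo f) ({1..length (rep_endo f)} - I) = rep_endo g \<and>
       stdr (rep_endo f) I = rep_endo h}))"

definition efdeg :: "endo \<Rightarrow> nat" where
  "efdeg f = length (rep_endo f)"

end

theory Submission
  imports Defs
begin

section \<open>Enumerating finite sets of positions\<close>

text \<open>For a finite set X of positions, nth_elem X i is its i-th smallest element
  (counting from 1) and rank X x the number of elements of X not above x; these are
  the bijection \<tau>_X and its inverse.\<close>

definition rank :: "nat set \<Rightarrow> nat \<Rightarrow> nat" where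
  "rank X x = card {y\<in>X. y \<le> x}"

definition nth_elem :: "nat set \<Rightarrow> nat \<Rightarrow> nat" where
  "nth_elem X i = sorted_list_of_set X ! (i - 1)"

lemma image_atLeast1_shift: "g ` {1..k} = (\<lambda>i. g (Suc i)) ` {0..<k}"
proof -
  have "{1..k} = Suc ` {0..<k}"
    by (simp add: image_Suc_atLeastLessThan atLeastLessThanSuc_atLeastAtMost)
  then have "g ` {1..k} = g ` (Suc ` {0..<k})" by (rule arg_cong)
  then show ?thesis by (simp only: image_image)
qed

lemma rank_enum:
  assumes s: "strict_mono_on {1..k} e" and im: "e ` {1..k} = X" and i: "i \<in> {1..k}"
  shows "rank X (e i) = i"
proof -
  have "{y\<in>X. y \<le> e i} = e ` {1..i}"
  proof
    show "{y \<in> X. y \<le> e i} \<subseteq> e ` {1..i}"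
    proof
      fix y assume "y \<in> {y \<in> X. y \<le> e i}"
      then obtain j where j: "j \<in> {1..k}" "y = e j" "e j \<le> e i" using im by auto
      have "j \<le> i" using strict_mono_on_less_eq[OF s j(1) i] j(3) by simp
      then show "y \<in> e ` {1..i}" using j by auto
    qed
  next
    show "e ` {1..i} \<subseteq> {y \<in> X. y \<le> e i}"
    proof
      fix y assume "y \<in> e ` {1..i}"
      then obtain j where j: "j \<in> {1..i}" "y = e j" by auto
      have jk: "j \<in> {1..k}" using j i by auto
      moreover have "e j \<le> e i" using strict_mono_on_less_eq[OF s jk i] j by simp
      ultimately show "y \<in> {y \<in> X. y \<le> e i}" using j im by auto
    qed
  qed
  moreover have "inj_on e {1..i}"
    using strict_mono_on_imp_inj_on[OF s] i by (auto intro: inj_on_subset)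
  ultimately show ?thesis unfolding rank_def by (simp add: card_image)
qed

lemma sorted_enum:
  assumes s: "strict_mono_on {1..k} e" and im: "e ` {1..k} = X"
  shows "sorted_list_of_set X = map (\<lambda>i. e (Suc i)) [0..<k]"
proof -
  have fin: "finite X" using im by auto
  have "sorted_wrt (<) (map (\<lambda>i. e (Suc i)) [0..<k])"
    unfolding sorted_wrt_iff_nth_less using s by (auto intro: strict_mono_onD)
  moreover have "set (map (\<lambda>i. e (Suc i)) [0..<k]) = X"
    using im image_atLeast1_shift[of e k] by simp
  moreover have "length (map (\<lambda>i. e (Suc i)) [0..<k]) = card X"
    using card_image[OF strict_mono_on_imp_inj_on[OF s]] im by simp
  ultimately show ?thesis using sorted_list_of_set_unique[OF fin] by blast
qed

lemma nth_elem_props: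
  assumes fin: "finite X"
  shows "strict_mono_on {1..card X} (nth_elem X)" "nth_elem X ` {1..card X} = X"
proof -
  let ?s = "sorted_list_of_set X"
  have len: "length ?s = card X" using fin by simp
  have sorted: "sorted_wrt (<) ?s" by simp
  show "strict_mono_on {1..card X} (nth_elem X)"
  proof (rule strict_mono_onI)
    fix r s assume "r \<in> {1..card X}" "s \<in> {1..card X}" "r < s"
    then show "nth_elem X r < nth_elem X s"
      using sorted len by (auto simp: nth_elem_def sorted_wrt_iff_nth_less)
  qed
  have "nth_elem X ` {1..card X} = (\<lambda>i. ?s ! i) ` {0..<card X}"
    using image_atLeast1_shift[of "nth_elem X" "card X"] by (simp add: nth_elem_def)
  also have "\<dots> = set ?s" using len by (auto simp: set_conv_nth)
  also have "\<dots> = X" using fin by simp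
  finally show "nth_elem X ` {1..card X} = X" .
qed

lemma nth_elem_inj_iff:
  assumes "finite X" "i \<in> {1..card X}" "j \<in> {1..card X}"
  shows "nth_elem X i = nth_elem X j \<longleftrightarrow> i = j"
  using strict_mono_on_eq[OF nth_elem_props(1)[OF assms(1)]] assms by blast

lemma nth_elem_in: "finite X \<Longrightarrow> i \<in> {1..card X} \<Longrightarrow> nth_elem X i \<in> X"
  using nth_elem_props(2) by blast

lemma nth_elem_img_sub: "finite X \<Longrightarrow> J \<subseteq> {1..card X} \<Longrightarrow> nth_elem X ` J \<subseteq> X"
  using nth_elem_props(2) by blast

lemma nth_elem_img_mem:
  assumes "finite X" "J \<subseteq> {1..card X}" "i \<in> {1..card X}"
  shows "nth_elem X i \<in> nth_elem X ` J \<longleftrightarrow> i \<in> J"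
  using assms nth_elem_inj_iff[OF assms(1)] by blast

lemma nth_elem_img_inj:
  assumes fin: "finite X" and "J \<subseteq> {1..card X}" "J' \<subseteq> {1..card X}"
    "nth_elem X ` J = nth_elem X ` J'"
  shows "J = J'"
  using inj_on_image_eq_iff[OF strict_mono_on_imp_inj_on[OF nth_elem_props(1)[OF fin]]] assms
  by blast

lemma nth_elem_img_diff:
  assumes fin: "finite X" and J: "J \<subseteq> {1..card X}"
  shows "nth_elem X ` ({1..card X} - J) = X - nth_elem X ` J"
  using inj_on_image_set_diff[OF strict_mono_on_imp_inj_on[OF nth_elem_props(1)[OF fin]]] J
    nth_elem_props(2)[OF fin] by simp

lemma nth_elem_sub_img:
  assumes fin: "finite X" and Y: "Y \<subseteq> X"
  shows "nth_elem X ` {j\<in>{1..card X}. nth_elem X j \<in> Y} = Y"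
proof
  show "Y \<subseteq> nth_elem X ` {j\<in>{1..card X}. nth_elem X j \<in> Y}"
  proof
    fix x assume x: "x \<in> Y"
    then obtain j where "j \<in> {1..card X}" "x = nth_elem X j"
      using nth_elem_props(2)[OF fin] Y by blast
    then show "x \<in> nth_elem X ` {j\<in>{1..card X}. nth_elem X j \<in> Y}" using x by auto
  qed
qed auto

section \<open>Standardization\<close>

lemma restr_in: "x \<in> X \<Longrightarrow> restr f X x \<in> X"
  by (simp add: restr_def)

lemma stdr_enum:
  assumes s: "strict_mono_on {1..k} e" and im: "e ` {1..k} = X"
  shows "stdr f X = map (\<lambda>i. rank X (restr f X (e (Suc i)))) [0..<k]"
  unfolding stdr_def sorted_enum[OF s im] rank_def by simp

text \<open>Characterisation of std(f^X): for any increasing enumeration e of X, the list L is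
  std(f^X) iff e transports L to f^X.  All computations with stdr go through this.\<close>
lemma std_char:
  assumes s: "strict_mono_on {1..k} e" and im: "e ` {1..k} = X"
    and len: "length L = k"
    and h: "\<forall>i\<in>{1..k}. ap L i \<in> {1..k} \<and> e (ap L i) = restr f X (e i)"
  shows "stdr f X = L"
proof (rule nth_equalityI)
  show "length (stdr f X) = length L" using stdr_enum[OF s im] len by simp
next
  fix i assume "i < length (stdr f X)"
  then have i: "Suc i \<in> {1..k}" using stdr_enum[OF s im] by simp
  have a: "ap L (Suc i) \<in> {1..k}" using h i by blast
  have "stdr f X ! i = rank X (restr f X (e (Suc i)))"
    using stdr_enum[OF s im] i by simp
  also have "\<dots> = rank X (e (ap L (Suc i)))" using h i by metis
  also have "\<dots> = ap L (Suc i)" by (rule rank_enum[OF s im a])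
  also have "\<dots> = L ! i" by (simp add: ap_def)
  finally show "stdr f X ! i = L ! i" .
qed

lemma std_props:
  assumes s: "strict_mono_on {1..k} e" and im: "e ` {1..k} = X"
  shows "length (stdr f X) = k"
    "\<And>i. i\<in>{1..k} \<Longrightarrow> ap (stdr f X) i \<in> {1..k} \<and> e (ap (stdr f X) i) = restr f X (e i)"
proof -
  show "length (stdr f X) = k" using stdr_enum[OF s im] by simp
  fix i assume i: "i \<in> {1..k}"
  have "restr f X (e i) \<in> X" using restr_in i im by auto
  then obtain j where j: "j \<in> {1..k}" "restr f X (e i) = e j" using im by auto
  have "ap (stdr f X) i = rank X (restr f X (e i))"
    using stdr_enum[OF s im] i by (auto simp: ap_def)
  also have "\<dots> = j" using j rank_enum[OF s im] by simp
  finally show "ap (stdr f X) i \<in> {1..k} \<and> e (ap (stdr f X) i) = restr f X (e i)"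
    using j by simp
qed

lemma std_props_nth_elem:
  assumes "finite X"
  shows "length (stdr f X) = card X"
    "\<And>i. i\<in>{1..card X} \<Longrightarrow> ap (stdr f X) i \<in> {1..card X} \<and>
       nth_elem X (ap (stdr f X) i) = restr f X (nth_elem X i)"
  using std_props[OF nth_elem_props[OF assms]] by auto

lemma is_endo_ap: "is_endo L \<longleftrightarrow> (\<forall>i\<in>{1..length L}. ap L i \<in> {1..length L})"
proof -
  have "set L = (\<lambda>i. ap L i) ` {1..length L}"
    using image_atLeast1_shift[of "ap L" "length L"] by (auto simp: ap_def set_conv_nth image_def)
  then show ?thesis unfolding is_endo_def by auto
qed

lemma endo_stdr: "finite X \<Longrightarrow> is_endo (stdr f X)"
  using std_props_nth_elem(1)[of X f] std_props_nth_elem(2)[of X _ f] by (simp add: is_endo_ap)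

lemma length_stdr: "finite X \<Longrightarrow> length (stdr f X) = card X"
  using std_props_nth_elem by blast

lemma stdr_empty: "stdr f {} = []"
  by (simp add: stdr_def)

lemma stdr_full:
  assumes "is_endo f"
  shows "stdr f {1..length f} = f"
  by (rule std_char[OF strict_mono_on_id]) (use assms in \<open>auto simp: is_endo_ap restr_def\<close>)

lemma restr_stdr_transport:
  assumes fin: "finite X" and J: "J \<subseteq> {1..card X}" and k: "k \<in> J"
  shows "nth_elem X (restr (stdr f X) J k) = restr f (nth_elem X ` J) (nth_elem X k)"
proof -
  let ?g = "stdr f X" and ?x = "nth_elem X k"
  have kX: "k \<in> {1..card X}" using k J by auto
  have p: "ap ?g k \<in> {1..card X}" "nth_elem X (ap ?g k) = restr f X ?x"
    using std_props_nth_elem(2)[OF fin kX] by auto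
  have EJX: "nth_elem X ` J \<subseteq> X" using nth_elem_img_sub[OF fin J] .
  show ?thesis
  proof (cases "ap ?g k \<in> J")
    case True
    then have "restr f X ?x \<in> nth_elem X ` J" using p by (metis image_eqI)
    then show ?thesis using True p EJX by (auto simp: restr_def)
  next
    case False
    have "ap f ?x \<notin> nth_elem X ` J"
    proof
      assume a: "ap f ?x \<in> nth_elem X ` J"
      then obtain j where j: "j \<in> J" "ap f ?x = nth_elem X j" by auto
      have "restr f X ?x = ap f ?x" using a EJX by (auto simp: restr_def)
      then have "nth_elem X (ap ?g k) = nth_elem X j" using p j by simp
      then have "ap ?g k = j" using nth_elem_inj_iff[OF fin p(1)] j J by blast
      then show False using False j by simp
    qed
    then show ?thesis using False by (simp add: restr_def)
  qed
qed

lemma stdr_nested: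
  assumes fin: "finite X" and J: "J \<subseteq> {1..card X}"
  shows "stdr (stdr f X) J = stdr f (nth_elem X ` J)"
proof -
  let ?g = "stdr f X"
  have finJ: "finite J" using J finite_subset by blast
  have enJ: "\<And>i. i \<in> {1..card J} \<Longrightarrow> nth_elem J i \<in> J" using nth_elem_in[OF finJ] by blast
  have s: "strict_mono_on {1..card J} (\<lambda>i. nth_elem X (nth_elem J i))"
  proof (rule strict_mono_onI)
    fix i j assume ij: "i \<in> {1..card J}" "j \<in> {1..card J}" "i < j"
    then have "nth_elem J i < nth_elem J j"
      using strict_mono_onD[OF nth_elem_props(1)[OF finJ]] by blast
    moreover have "nth_elem J i \<in> {1..card X}" "nth_elem J j \<in> {1..card X}"
      using enJ[OF ij(1)] enJ[OF ij(2)] J by auto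
    ultimately show "nth_elem X (nth_elem J i) < nth_elem X (nth_elem J j)"
      using strict_mono_onD[OF nth_elem_props(1)[OF fin]] by blast
  qed
  have im: "(\<lambda>i. nth_elem X (nth_elem J i)) ` {1..card J} = nth_elem X ` J"
    using nth_elem_props(2)[OF finJ] by (metis image_image)
  have "stdr f (nth_elem X ` J) = stdr ?g J"
  proof (rule std_char[OF s im])
    show "length (stdr ?g J) = card J" using length_stdr[OF finJ] .
    show "\<forall>i\<in>{1..card J}. ap (stdr ?g J) i \<in> {1..card J} \<and>
        nth_elem X (nth_elem J (ap (stdr ?g J) i)) = restr f (nth_elem X ` J) (nth_elem X (nth_elem J i))"
      using std_props_nth_elem(2)[OF finJ] restr_stdr_transport[OF fin J enJ] by metis
  qed
  then show ?thesis by simp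
qed

lemma ideal_stdr_iff:
  assumes fin: "finite X" and J: "J \<subseteq> {1..card X}"
  shows "is_ideal (stdr f X) J \<longleftrightarrow>
    (\<forall>x\<in>X. restr f X x \<in> nth_elem X ` J \<longrightarrow> x \<in> nth_elem X ` J)"
proof -
  have step: "(ap (stdr f X) j \<in> J) = (restr f X (nth_elem X j) \<in> nth_elem X ` J)"
    if j: "j \<in> {1..card X}" for j
  proof -
    have p: "ap (stdr f X) j \<in> {1..card X}"
      "nth_elem X (ap (stdr f X) j) = restr f X (nth_elem X j)"
      using std_props_nth_elem(2)[OF fin j] by auto
    show ?thesis using nth_elem_img_mem[OF fin J p(1)] p(2) by simp
  qed
  have "is_ideal (stdr f X) J \<longleftrightarrow> (\<forall>j\<in>{1..card X}. ap (stdr f X) j \<in> J \<longrightarrow> j \<in> J)"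
    using J length_stdr[OF fin] by (simp add: is_ideal_def)
  also have "\<dots> \<longleftrightarrow> (\<forall>j\<in>{1..card X}. restr f X (nth_elem X j) \<in> nth_elem X ` J \<longrightarrow>
      nth_elem X j \<in> nth_elem X ` J)"
    using step nth_elem_img_mem[OF fin J] by auto
  also have "\<dots> \<longleftrightarrow> (\<forall>x\<in>nth_elem X ` {1..card X}.
      restr f X x \<in> nth_elem X ` J \<longrightarrow> x \<in> nth_elem X ` J)"
    by blast
  also have "\<dots> \<longleftrightarrow> (\<forall>x\<in>X. restr f X x \<in> nth_elem X ` J \<longrightarrow> x \<in> nth_elem X ` J)"
    using nth_elem_props(2)[OF fin] by simp
  finally show ?thesis .
qed

section \<open>Shifted concatenation\<close>

lemma length_shcat[simp]: "length (shcat F G) = length F + length G"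
  by (simp add: shcat_def)

lemma ap_shcat:
  assumes "1 \<le> i" "i \<le> length F + length G"
  shows "ap (shcat F G) i = (if i \<le> length F then ap F i else ap G (i - length F) + length F)"
  using assms by (auto simp: ap_def shcat_def nth_append)

lemma endo_shcat: "is_endo f \<Longrightarrow> is_endo g \<Longrightarrow> is_endo (shcat f g)"
  unfolding is_endo_def shcat_def by auto

lemma shcat_assoc: "shcat (shcat f g) h = shcat f (shcat g h)"
  by (simp add: shcat_def add.assoc)

lemma shcat_Nil1[simp]: "shcat [] g = g" by (simp add: shcat_def)
lemma shcat_Nil2[simp]: "shcat f [] = f" by (simp add: shcat_def)
lemma shcat_eq_Nil: "shcat f g = [] \<longleftrightarrow> f = [] \<and> g = []" by (simp add: shcat_def)

lemma split_range: "{1..n+m} = {1..n} \<union> (\<lambda>j. j + n) ` {1..(m::nat)}"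
proof
  show "{1..n+m} \<subseteq> {1..n} \<union> (\<lambda>j. j + n) ` {1..m}"
  proof
    fix j assume j: "j \<in> {1..n+m}"
    show "j \<in> {1..n} \<union> (\<lambda>j. j + n) ` {1..m}"
    proof (cases "j \<le> n")
      case True then show ?thesis using j by auto
    next
      case False
      then have "j = (j - n) + n" "j - n \<in> {1..m}" using j by auto
      then show ?thesis by (metis UnI2 image_eqI)
    qed
  qed
qed auto

lemma enum_shifted_union:
  fixes n :: nat
  assumes X: "X \<subseteq> {1..n}" and finY: "finite Y" and Y0: "0 \<notin> Y"
  defines "E \<equiv> \<lambda>i. if i \<le> card X then nth_elem X i else nth_elem Y (i - card X) + n"
  shows "strict_mono_on {1..card X + card Y} E"
    and "E ` {1..card X + card Y} = X \<union> (\<lambda>y. y + n) ` Y"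
proof -
  let ?a = "card X" and ?b = "card Y"
  have finX: "finite X" using X finite_subset by blast
  have eX: "\<And>i. i \<in> {1..?a} \<Longrightarrow> nth_elem X i \<in> {1..n}" using nth_elem_in[OF finX] X by blast
  have eYa: "\<And>i. i \<in> {1..?b} \<Longrightarrow> nth_elem Y i \<in> Y" using nth_elem_in[OF finY] by blast
  show "strict_mono_on {1..?a + ?b} E"
  proof (rule strict_mono_onI)
    fix i j assume ij: "i \<in> {1..?a + ?b}" "j \<in> {1..?a + ?b}" "i < j"
    consider "j \<le> ?a" | "i \<le> ?a" "\<not> j \<le> ?a" | "\<not> i \<le> ?a" by linarith
    then show "E i < E j"
    proof cases
      case 1
      then show ?thesis
        using ij strict_mono_onD[OF nth_elem_props(1)[OF finX], of i j] by (auto simp: E_def)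
    next
      case 2
      then have "j - ?a \<in> {1..?b}" using ij by auto
      then have "nth_elem Y (j - ?a) \<in> Y" by (rule eYa)
      then have "nth_elem Y (j - ?a) \<noteq> 0" using Y0 by metis
      then show ?thesis using 2 eX[of i] ij by (auto simp: E_def)
    next
      case 3
      then have "i - ?a \<in> {1..?b}" "j - ?a \<in> {1..?b}" "i - ?a < j - ?a" using ij by auto
      then have "nth_elem Y (i - ?a) < nth_elem Y (j - ?a)"
        using strict_mono_onD[OF nth_elem_props(1)[OF finY]] by blast
      then show ?thesis using 3 ij by (simp add: E_def)
    qed
  qed
  have "E ` {1..?a + ?b} = E ` {1..?a} \<union> (\<lambda>i. E (i + ?a)) ` {1..?b}"
    by (simp only: split_range image_Un image_image)
  also have "E ` {1..?a} = nth_elem X ` {1..?a}" by (rule image_cong) (auto simp: E_def)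
  also have "(\<lambda>i. E (i + ?a)) ` {1..?b} = (\<lambda>y. y + n) ` (nth_elem Y ` {1..?b})"
    by (auto simp: E_def image_image)
  finally show "E ` {1..?a + ?b} = X \<union> (\<lambda>y. y + n) ` Y"
    using nth_elem_props(2)[OF finX] nth_elem_props(2)[OF finY] by simp
qed

lemma restr_shcat_low:
  assumes ef: "is_endo f" and Y: "Y \<subseteq> {1..length g}" and x: "x \<in> {1..length f}"
  shows "restr (shcat f g) (X \<union> (\<lambda>y. y + length f) ` Y) x = restr f (X \<inter> {1..length f}) x"
proof -
  have "ap (shcat f g) x = ap f x" using ap_shcat[of x f g] x by auto
  moreover have "ap f x \<in> {1..length f}" using ef x by (simp add: is_endo_ap)
  ultimately show ?thesis using Y by (auto simp: restr_def)
qed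

lemma restr_shcat_high:
  assumes eg: "is_endo g" and X: "X \<subseteq> {1..length f}" and y: "y \<in> {1..length g}"
  shows "restr (shcat f g) (X \<union> (\<lambda>y. y + length f) ` Y) (y + length f) =
    restr g Y y + length f"
proof -
  let ?n = "length f"
  have apy: "ap (shcat f g) (y + ?n) = ap g y + ?n" using ap_shcat[of "y + ?n" f g] y by auto
  have "ap g y \<in> {1..length g}" using eg y by (simp add: is_endo_ap)
  then have "ap g y + ?n \<in> X \<union> (\<lambda>y. y + ?n) ` Y \<longleftrightarrow> ap g y \<in> Y" using X by auto
  then show ?thesis unfolding restr_def apy by auto
qed

lemma stdr_shcat:
  assumes ef: "is_endo f" and eg: "is_endo g"
    and X: "X \<subseteq> {1..length f}" and Y: "Y \<subseteq> {1..length g}"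
  shows "stdr (shcat f g) (X \<union> (\<lambda>y. y + length f) ` Y) = shcat (stdr f X) (stdr g Y)"
proof -
  let ?n = "length f" and ?a = "card X" and ?b = "card Y"
  let ?Z = "X \<union> (\<lambda>y. y + ?n) ` Y" and ?L = "shcat (stdr f X) (stdr g Y)"
  have finX: "finite X" using X finite_subset by blast
  have finY: "finite Y" using Y finite_subset by blast
  have Y0: "0 \<notin> Y" using Y by auto
  define E where "E i = (if i \<le> ?a then nth_elem X i else nth_elem Y (i - ?a) + ?n)" for i
  have lens: "length (stdr f X) = ?a" "length (stdr g Y) = ?b"
    using length_stdr[OF finX] length_stdr[OF finY] by auto
  have transport: "ap ?L i \<in> {1..?a + ?b} \<and> E (ap ?L i) = restr (shcat f g) ?Z (E i)"
    if i: "i \<in> {1..?a + ?b}" for i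
  proof (cases "i \<le> ?a")
    case True
    then have i1: "i \<in> {1..?a}" using i by auto
    have p: "ap (stdr f X) i \<in> {1..?a}" "nth_elem X (ap (stdr f X) i) = restr f X (nth_elem X i)"
      using std_props_nth_elem(2)[OF finX i1] by auto
    have "nth_elem X i \<in> {1..?n}" using nth_elem_in[OF finX i1] X by blast
    then have "restr (shcat f g) ?Z (nth_elem X i) = restr f X (nth_elem X i)"
      using restr_shcat_low[OF ef Y] X by (simp add: Int_absorb2)
    then show ?thesis using ap_shcat[of i "stdr f X" "stdr g Y"] i lens True p
      by (auto simp: E_def)
  next
    case False
    define j where "j = i - ?a"
    have j: "j \<in> {1..?b}" using i False j_def by auto
    have p: "ap (stdr g Y) j \<in> {1..?b}" "nth_elem Y (ap (stdr g Y) j) = restr g Y (nth_elem Y j)"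
      using std_props_nth_elem(2)[OF finY j] by auto
    have "nth_elem Y j \<in> {1..length g}" using nth_elem_in[OF finY j] Y by blast
    then have "restr (shcat f g) ?Z (nth_elem Y j + ?n) = restr g Y (nth_elem Y j) + ?n"
      by (rule restr_shcat_high[OF eg X])
    moreover have "ap ?L i = ap (stdr g Y) j + ?a"
      using ap_shcat[of i "stdr f X" "stdr g Y"] i lens False j_def by auto
    ultimately show ?thesis using p False j_def by (simp add: E_def)
  qed
  show ?thesis
    by (rule std_char[OF enum_shifted_union[OF X finY Y0, folded E_def]])
      (use lens transport in auto)
qed

section \<open>Ideals and the splitting of an endofunction\<close>

text \<open>For an ideal I of f we write lpart f I = std(f^{[n]-I}) and rpart f I = std(f^I):
  the two tensor factors in the coproduct of S^f.\<close>

abbreviation dom_endo :: "nat list \<Rightarrow> nat set" where "dom_endo f \<equiv> {1..length f}"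
abbreviation ideals :: "nat list \<Rightarrow> nat set set" where "ideals f \<equiv> {I. is_ideal f I}"
abbreviation lpart :: "nat list \<Rightarrow> nat set \<Rightarrow> nat list" where "lpart f I \<equiv> stdr f (dom_endo f - I)"
abbreviation rpart :: "nat list \<Rightarrow> nat set \<Rightarrow> nat list" where "rpart f I \<equiv> stdr f I"

lemma ideal_sub: "is_ideal f I \<Longrightarrow> I \<subseteq> dom_endo f"
  by (simp add: is_ideal_def)

lemma finite_ideal: "is_ideal f I \<Longrightarrow> finite I"
  using ideal_sub finite_subset by blast

lemma finite_ideals: "finite (ideals f)"
proof -
  have "ideals f \<subseteq> Pow (dom_endo f)" using ideal_sub by blast
  then show ?thesis using finite_subset by blast
qed

lemma ideal_empty: "is_ideal f {}" by (simp add: is_ideal_def)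
lemma ideal_full: "is_ideal f (dom_endo f)" by (simp add: is_ideal_def)

lemma ideal_union_iff:
  assumes I: "is_ideal f I" and Y: "Y \<subseteq> dom_endo f - I"
  shows "(\<forall>x\<in>dom_endo f - I. restr f (dom_endo f - I) x \<in> Y \<longrightarrow> x \<in> Y) \<longleftrightarrow> is_ideal f (I \<union> Y)"
proof
  assume h: "\<forall>x\<in>dom_endo f - I. restr f (dom_endo f - I) x \<in> Y \<longrightarrow> x \<in> Y"
  show "is_ideal f (I \<union> Y)"
    unfolding is_ideal_def
  proof (intro conjI ballI impI)
    show "I \<union> Y \<subseteq> dom_endo f" using ideal_sub[OF I] Y by auto
  next
    fix j assume j: "j \<in> dom_endo f" and a: "ap f j \<in> I \<union> Y"
    show "j \<in> I \<union> Y"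
    proof (cases "j \<in> I")
      case True then show ?thesis by simp
    next
      case False
      show ?thesis
      proof (cases "ap f j \<in> I")
        case True
        then have "j \<in> I" using I j by (simp add: is_ideal_def)
        then show ?thesis by simp
      next
        case False2: False
        then have "ap f j \<in> Y" using a by simp
        then have "ap f j \<in> dom_endo f - I" using Y by auto
        then have "restr f (dom_endo f - I) j = ap f j" by (simp add: restr_def)
        then show ?thesis using h j False \<open>ap f j \<in> Y\<close> by auto
      qed
    qed
  qed
next
  assume h: "is_ideal f (I \<union> Y)"
  show "\<forall>x\<in>dom_endo f - I. restr f (dom_endo f - I) x \<in> Y \<longrightarrow> x \<in> Y"
  proof (intro ballI impI)
    fix x assume x: "x \<in> dom_endo f - I" and r: "restr f (dom_endo f - I) x \<in> Y"
    show "x \<in> Y"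
    proof (cases "ap f x \<in> dom_endo f - I")
      case True
      then have "ap f x \<in> Y" using r by (simp add: restr_def)
      then have "x \<in> I \<union> Y" using h x unfolding is_ideal_def by blast
      then show ?thesis using x by auto
    next
      case False
      have "restr f (dom_endo f - I) x = x" unfolding restr_def using False by (rule if_not_P)
      then show ?thesis using r by simp
    qed
  qed
qed

lemma ideal_subset_iff:
  assumes I: "is_ideal f I" and Z: "Z \<subseteq> I"
  shows "(\<forall>x\<in>I. restr f I x \<in> Z \<longrightarrow> x \<in> Z) \<longleftrightarrow> is_ideal f Z"
proof
  assume h: "\<forall>x\<in>I. restr f I x \<in> Z \<longrightarrow> x \<in> Z"
  show "is_ideal f Z"
    unfolding is_ideal_def
  proof (intro conjI ballI impI)
    show "Z \<subseteq> dom_endo f" using ideal_sub[OF I] Z by auto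
  next
    fix j assume j: "j \<in> dom_endo f" and a: "ap f j \<in> Z"
    then have jI: "j \<in> I" using I Z by (auto simp: is_ideal_def)
    have "restr f I j = ap f j" using a Z by (auto simp: restr_def)
    then show "j \<in> Z" using h jI a by auto
  qed
next
  assume h: "is_ideal f Z"
  show "\<forall>x\<in>I. restr f I x \<in> Z \<longrightarrow> x \<in> Z"
  proof (intro ballI impI)
    fix x assume x: "x \<in> I" and r: "restr f I x \<in> Z"
    show "x \<in> Z"
    proof (cases "ap f x \<in> I")
      case True
      then have "ap f x \<in> Z" using r by (simp add: restr_def)
      moreover have "x \<in> dom_endo f" using x ideal_sub[OF I] by auto
      ultimately show ?thesis using h by (simp add: is_ideal_def)
    next
      case False
      then show ?thesis using r by (simp add: restr_def)
    qed
  qed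
qed

text \<open>Pairs (Z, Y) of disjoint sets with Z and Z \<union> Y ideals: the common index set of the
  two iterated splittings of f.\<close>
definition ideal_pairs :: "nat list \<Rightarrow> (nat set \<times> nat set) set" where
  "ideal_pairs f = {(Z, Y). is_ideal f Z \<and> is_ideal f (Z \<union> Y) \<and> Y \<inter> Z = {}}"

lemma ideal_std_sub: "finite X \<Longrightarrow> is_ideal (stdr f X) J \<Longrightarrow> J \<subseteq> {1..card X}"
  using ideal_sub length_stdr by metis

lemma split_left_pair:
  assumes IJ: "is_ideal f I" "is_ideal (lpart f I) J"
  shows "(I, nth_elem (dom_endo f - I) ` J) \<in> ideal_pairs f"
proof -
  define C where "C = dom_endo f - I"
  have finC: "finite C" using C_def by simp
  have Jsub: "J \<subseteq> {1..card C}" using ideal_std_sub[OF finC] IJ C_def by simp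
  have Ysub: "nth_elem C ` J \<subseteq> C" using nth_elem_img_sub[OF finC Jsub] .
  have "\<forall>x\<in>C. restr f C x \<in> nth_elem C ` J \<longrightarrow> x \<in> nth_elem C ` J"
    using ideal_stdr_iff[OF finC Jsub] IJ C_def by simp
  then have "is_ideal f (I \<union> nth_elem C ` J)" using ideal_union_iff[OF IJ(1)] Ysub C_def by simp
  moreover have "nth_elem C ` J \<inter> I = {}" using Ysub C_def by auto
  ultimately show ?thesis using IJ C_def by (simp add: ideal_pairs_def)
qed

lemma split_left_bij:
  "bij_betw (\<lambda>(I, J). (I, nth_elem (dom_endo f - I) ` J))
     (Sigma (ideals f) (\<lambda>I. ideals (lpart f I))) (ideal_pairs f)"
proof (rule bij_betw_imageI)
  let ?S = "Sigma (ideals f) (\<lambda>I. ideals (lpart f I))"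
  show "inj_on (\<lambda>(I, J). (I, nth_elem (dom_endo f - I) ` J)) ?S"
  proof (rule inj_onI)
    fix p q assume p: "p \<in> ?S" and q: "q \<in> ?S"
      and e: "(\<lambda>(I, J). (I, nth_elem (dom_endo f - I) ` J)) p =
        (\<lambda>(I, J). (I, nth_elem (dom_endo f - I) ` J)) q"
    obtain I J I' J' where pq: "p = (I, J)" "q = (I', J')" by fastforce
    have II: "I = I'" and e': "nth_elem (dom_endo f - I) ` J = nth_elem (dom_endo f - I) ` J'"
      using e pq by auto
    have finC: "finite (dom_endo f - I)" by simp
    have "is_ideal (lpart f I) J" "is_ideal (lpart f I) J'" using p q pq II by auto
    then have "J = J'"
      using nth_elem_img_inj[OF finC ideal_std_sub[OF finC] ideal_std_sub[OF finC] e'] by blast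
    then show "p = q" using II pq by simp
  qed
  show "(\<lambda>(I, J). (I, nth_elem (dom_endo f - I) ` J)) ` ?S = ideal_pairs f"
  proof
    show "(\<lambda>(I, J). (I, nth_elem (dom_endo f - I) ` J)) ` ?S \<subseteq> ideal_pairs f"
      using split_left_pair by auto
    show "ideal_pairs f \<subseteq> (\<lambda>(I, J). (I, nth_elem (dom_endo f - I) ` J)) ` ?S"
    proof clarify
      fix Z Y assume "(Z, Y) \<in> ideal_pairs f"
      then have Z: "is_ideal f Z" and ZY: "is_ideal f (Z \<union> Y)" and d: "Y \<inter> Z = {}"
        by (auto simp: ideal_pairs_def)
      define C where "C = dom_endo f - Z"
      have finC: "finite C" using C_def by simp
      have Ysub: "Y \<subseteq> C" using ideal_sub[OF ZY] d C_def by auto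
      define J where "J = {j\<in>{1..card C}. nth_elem C j \<in> Y}"
      have Jsub: "J \<subseteq> {1..card C}" using J_def by auto
      have imJ: "nth_elem C ` J = Y" using nth_elem_sub_img[OF finC Ysub] J_def by simp
      have "\<forall>x\<in>C. restr f C x \<in> Y \<longrightarrow> x \<in> Y" using ideal_union_iff[OF Z] Ysub ZY C_def by simp
      then have "is_ideal (stdr f C) J" using ideal_stdr_iff[OF finC Jsub] imJ by simp
      then have "(Z, J) \<in> ?S" using Z C_def by simp
      then show "(Z, Y) \<in> (\<lambda>(I, J). (I, nth_elem (dom_endo f - I) ` J)) ` ?S"
        using imJ C_def by (metis (no_types, lifting) case_prod_conv image_eqI)
    qed
  qed
qed

lemma split_left_parts:
  assumes I: "is_ideal f I" and J: "is_ideal (lpart f I) J"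
  defines "Y \<equiv> nth_elem (dom_endo f - I) ` J"
  shows "lpart (lpart f I) J = stdr f (dom_endo f - (I \<union> Y))" and "rpart (lpart f I) J = stdr f Y"
proof -
  define C where "C = dom_endo f - I"
  have finC: "finite C" using C_def by simp
  have Jsub: "J \<subseteq> {1..card C}" using ideal_std_sub[OF finC] J C_def by simp
  have "lpart (lpart f I) J = stdr f (nth_elem C ` ({1..card C} - J))"
    using stdr_nested[OF finC, of "{1..card C} - J" f] length_stdr[OF finC] C_def by simp
  also have "nth_elem C ` ({1..card C} - J) = dom_endo f - (I \<union> Y)"
    using nth_elem_img_diff[OF finC Jsub] C_def Y_def by auto
  finally show "lpart (lpart f I) J = stdr f (dom_endo f - (I \<union> Y))" .
  show "rpart (lpart f I) J = stdr f Y"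
    using stdr_nested[OF finC Jsub, of f] C_def Y_def by simp
qed

lemma split_right_pair:
  assumes IJ: "is_ideal f I" "is_ideal (rpart f I) J"
  shows "(nth_elem I ` J, I - nth_elem I ` J) \<in> ideal_pairs f"
proof -
  have finI: "finite I" using finite_ideal[OF IJ(1)] .
  have Jsub: "J \<subseteq> {1..card I}" using ideal_std_sub[OF finI] IJ by simp
  have Zsub: "nth_elem I ` J \<subseteq> I" using nth_elem_img_sub[OF finI Jsub] .
  have "\<forall>x\<in>I. restr f I x \<in> nth_elem I ` J \<longrightarrow> x \<in> nth_elem I ` J"
    using ideal_stdr_iff[OF finI Jsub] IJ by simp
  then have "is_ideal f (nth_elem I ` J)" using ideal_subset_iff[OF IJ(1) Zsub] by simp
  moreover have "nth_elem I ` J \<union> (I - nth_elem I ` J) = I" using Zsub by auto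
  moreover have "(I - nth_elem I ` J) \<inter> nth_elem I ` J = {}" by blast
  ultimately show ?thesis using IJ by (simp add: ideal_pairs_def)
qed

lemma split_right_bij:
  "bij_betw (\<lambda>(I, J). (nth_elem I ` J, I - nth_elem I ` J))
     (Sigma (ideals f) (\<lambda>I. ideals (rpart f I))) (ideal_pairs f)"
proof (rule bij_betw_imageI)
  let ?S = "Sigma (ideals f) (\<lambda>I. ideals (rpart f I))"
  let ?\<psi> = "\<lambda>(I, J). (nth_elem I ` J, I - nth_elem I ` J)"
  have union: "nth_elem I ` J \<union> (I - nth_elem I ` J) = I" if "(I, J) \<in> ?S" for I J
  proof -
    have finI: "finite I" using that finite_ideal by auto
    have "J \<subseteq> {1..card I}" using ideal_std_sub[OF finI] that by auto
    then show ?thesis using nth_elem_img_sub[OF finI] by blast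
  qed
  show "inj_on ?\<psi> ?S"
  proof (rule inj_onI)
    fix p q assume p: "p \<in> ?S" and q: "q \<in> ?S" and e: "?\<psi> p = ?\<psi> q"
    obtain I J I' J' where pq: "p = (I, J)" "q = (I', J')" by fastforce
    have e': "nth_elem I ` J = nth_elem I' ` J'" "I - nth_elem I ` J = I' - nth_elem I' ` J'"
      using e pq by auto
    have "I = nth_elem I ` J \<union> (I - nth_elem I ` J)" using union p pq by simp
    also have "\<dots> = nth_elem I' ` J' \<union> (I' - nth_elem I' ` J')" using e' by (simp only:)
    also have "\<dots> = I'" using union q pq by simp
    finally have II: "I = I'" .
    have finI: "finite I" using finite_ideal p pq by auto
    have "is_ideal (rpart f I) J" "is_ideal (rpart f I) J'" using p q pq II by auto
    moreover have "nth_elem I ` J = nth_elem I ` J'" using e'(1) II by simp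
    ultimately have "J = J'"
      using nth_elem_img_inj[OF finI ideal_std_sub[OF finI] ideal_std_sub[OF finI]] by presburger
    then show "p = q" using II pq by simp
  qed
  show "?\<psi> ` ?S = ideal_pairs f"
  proof
    show "?\<psi> ` ?S \<subseteq> ideal_pairs f"
      using split_right_pair by auto
    show "ideal_pairs f \<subseteq> ?\<psi> ` ?S"
    proof clarify
      fix Z Y assume "(Z, Y) \<in> ideal_pairs f"
      then have Z: "is_ideal f Z" and ZY: "is_ideal f (Z \<union> Y)" and d: "Y \<inter> Z = {}"
        by (auto simp: ideal_pairs_def)
      define I where "I = Z \<union> Y"
      have finI: "finite I" using finite_ideal[OF ZY] I_def by simp
      have Zsub: "Z \<subseteq> I" using I_def by auto
      define J where "J = {j\<in>{1..card I}. nth_elem I j \<in> Z}"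
      have Jsub: "J \<subseteq> {1..card I}" using J_def by auto
      have imJ: "nth_elem I ` J = Z" using nth_elem_sub_img[OF finI Zsub] J_def by simp
      have "\<forall>x\<in>I. restr f I x \<in> Z \<longrightarrow> x \<in> Z"
        using ideal_subset_iff[OF ZY[folded I_def] Zsub] Z by simp
      then have "is_ideal (stdr f I) J" using ideal_stdr_iff[OF finI Jsub] imJ by simp
      then have IJ: "(I, J) \<in> ?S" using ZY I_def by simp
      have "I - Z = Y" using I_def d by blast
      then have "(Z, Y) = ?\<psi> (I, J)" using imJ by simp
      then show "(Z, Y) \<in> ?\<psi> ` ?S" by (rule rev_image_eqI[OF IJ])
    qed
  qed
qed

lemma split_right_parts:
  assumes I: "is_ideal f I" and J: "is_ideal (rpart f I) J"
  defines "Z \<equiv> nth_elem I ` J"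
  shows "lpart (rpart f I) J = stdr f (I - Z)" and "rpart (rpart f I) J = stdr f Z"
    and "Z \<union> (I - Z) = I"
proof -
  have finI: "finite I" using finite_ideal[OF I] .
  have Jsub: "J \<subseteq> {1..card I}" using ideal_std_sub[OF finI] J by simp
  show "lpart (rpart f I) J = stdr f (I - Z)"
    using stdr_nested[OF finI, of "{1..card I} - J" f] length_stdr[OF finI]
      nth_elem_img_diff[OF finI Jsub] Z_def by simp
  show "rpart (rpart f I) J = stdr f Z" using stdr_nested[OF finI Jsub, of f] Z_def by simp
  show "Z \<union> (I - Z) = I" using nth_elem_img_sub[OF finI Jsub] Z_def by auto
qed

text \<open>Coassociativity of the splitting: both iterated splittings of f are indexed by the ideal
  pairs of f and produce the same triples of standardized restrictions.\<close>
lemma coassoc_sum: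
  fixes F :: "nat list \<Rightarrow> nat list \<Rightarrow> nat list \<Rightarrow> 'a::comm_monoid_add"
  shows "(\<Sum>I\<in>ideals f. \<Sum>J\<in>ideals (lpart f I). F (lpart (lpart f I) J) (rpart (lpart f I) J) (rpart f I))
       = (\<Sum>I\<in>ideals f. \<Sum>J\<in>ideals (rpart f I). F (lpart f I) (lpart (rpart f I) J) (rpart (rpart f I) J))"
    (is "?left = ?right")
proof -
  let ?G = "\<lambda>(Z, Y). F (stdr f (dom_endo f - (Z \<union> Y))) (stdr f Y) (stdr f Z)"
  have fin: "finite (ideals (g :: nat list))" for g by (rule finite_ideals)
  have "?left = (\<Sum>(I, J)\<in>Sigma (ideals f) (\<lambda>I. ideals (lpart f I)).
      F (lpart (lpart f I) J) (rpart (lpart f I) J) (rpart f I))"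
    by (rule sum.Sigma[OF fin]) (simp add: fin)
  also have "\<dots> = (\<Sum>(I, J)\<in>Sigma (ideals f) (\<lambda>I. ideals (lpart f I)).
      ?G (I, nth_elem (dom_endo f - I) ` J))"
  proof (rule sum.cong[OF refl])
    fix p assume p: "p \<in> Sigma (ideals f) (\<lambda>I. ideals (lpart f I))"
    obtain I J where pIJ: "p = (I, J)" by fastforce
    have IJ: "is_ideal f I" "is_ideal (lpart f I) J" using p pIJ by auto
    show "(case p of (I, J) \<Rightarrow> F (lpart (lpart f I) J) (rpart (lpart f I) J) (rpart f I)) =
        (case p of (I, J) \<Rightarrow> ?G (I, nth_elem (dom_endo f - I) ` J))"
      unfolding pIJ prod.case using split_left_parts[OF IJ] by (simp only:)
  qed
  also have "\<dots> = sum ?G (ideal_pairs f)"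
    using sum.reindex_bij_betw[OF split_left_bij, of ?G] by (simp add: case_prod_unfold)
  also have "\<dots> = (\<Sum>(I, J)\<in>Sigma (ideals f) (\<lambda>I. ideals (rpart f I)).
      ?G (nth_elem I ` J, I - nth_elem I ` J))"
    using sum.reindex_bij_betw[OF split_right_bij, of ?G] by (simp add: case_prod_unfold)
  also have "\<dots> = (\<Sum>(I, J)\<in>Sigma (ideals f) (\<lambda>I. ideals (rpart f I)).
      F (lpart f I) (lpart (rpart f I) J) (rpart (rpart f I) J))"
  proof (rule sum.cong[OF refl])
    fix p assume p: "p \<in> Sigma (ideals f) (\<lambda>I. ideals (rpart f I))"
    obtain I J where pIJ: "p = (I, J)" by fastforce
    have IJ: "is_ideal f I" "is_ideal (rpart f I) J" using p pIJ by auto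
    show "(case p of (I, J) \<Rightarrow> ?G (nth_elem I ` J, I - nth_elem I ` J)) =
        (case p of (I, J) \<Rightarrow> F (lpart f I) (lpart (rpart f I) J) (rpart (rpart f I) J))"
      unfolding pIJ prod.case using split_right_parts[OF IJ] by (simp only:)
  qed
  also have "\<dots> = ?right"
    by (rule sum.Sigma[OF fin, symmetric]) (simp add: fin)
  finally show ?thesis .
qed

lemma lpart_empty: "is_endo f \<Longrightarrow> lpart f {} = f" using stdr_full by simp
lemma rpart_empty: "rpart f {} = []" by (rule stdr_empty)
lemma lpart_full: "lpart f (dom_endo f) = []" by (simp add: stdr_empty)
lemma rpart_full: "is_endo f \<Longrightarrow> rpart f (dom_endo f) = f" using stdr_full by simp

lemma rpart_Nil_iff: "is_ideal f I \<Longrightarrow> rpart f I = [] \<longleftrightarrow> I = {}"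
  using length_stdr[OF finite_ideal] finite_ideal by (metis card_eq_0_iff length_0_conv)

lemma lpart_Nil_iff: "is_ideal f I \<Longrightarrow> lpart f I = [] \<longleftrightarrow> I = dom_endo f"
proof -
  assume I: "is_ideal f I"
  have L: "length (lpart f I) = card (dom_endo f - I)" by (simp add: length_stdr)
  have "lpart f I = [] \<longleftrightarrow> card (dom_endo f - I) = 0" using L by (metis length_0_conv)
  also have "\<dots> \<longleftrightarrow> dom_endo f - I = {}" by simp
  also have "\<dots> \<longleftrightarrow> I = dom_endo f" using ideal_sub[OF I] by auto
  finally show ?thesis .
qed

lemma length_rpart: "is_ideal f I \<Longrightarrow> length (rpart f I) = card I"
  using length_stdr finite_ideal by blast

lemma length_lpart: "is_ideal f I \<Longrightarrow> length (lpart f I) = length f - card I"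
proof -
  assume I: "is_ideal f I"
  have "length (lpart f I) = card (dom_endo f - I)" using length_stdr by simp
  also have "\<dots> = length f - card I" using ideal_sub[OF I] finite_ideal[OF I] by (simp add: card_Diff_subset)
  finally show ?thesis .
qed

lemma ideal_shcat_split:
  assumes K: "is_ideal (shcat f g) K"
  shows "is_ideal f (K \<inter> dom_endo f)" and "is_ideal g {j\<in>dom_endo g. j + length f \<in> K}"
    and "K = (K \<inter> dom_endo f) \<union> (\<lambda>j. j + length f) ` {j\<in>dom_endo g. j + length f \<in> K}"
proof -
  let ?n = "length f"
  have Kclosed: "j \<in> K" if "j \<in> dom_endo (shcat f g)" "ap (shcat f g) j \<in> K" for j
    using K that unfolding is_ideal_def by blast
  show "is_ideal f (K \<inter> dom_endo f)"
    unfolding is_ideal_def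
  proof (intro conjI ballI impI)
    fix j assume j: "j \<in> dom_endo f" and "ap f j \<in> K \<inter> dom_endo f"
    then have "ap (shcat f g) j \<in> K" using ap_shcat[of j f g] by auto
    then show "j \<in> K \<inter> dom_endo f" using Kclosed[of j] j by auto
  qed auto
  show "is_ideal g {j\<in>dom_endo g. j + ?n \<in> K}"
    unfolding is_ideal_def
  proof (intro conjI ballI impI)
    fix j assume j: "j \<in> dom_endo g" and "ap g j \<in> {j\<in>dom_endo g. j + ?n \<in> K}"
    then have "ap (shcat f g) (j + ?n) \<in> K" using ap_shcat[of "j + ?n" f g] by auto
    then show "j \<in> {j\<in>dom_endo g. j + ?n \<in> K}" using Kclosed[of "j + ?n"] j by auto
  qed auto
  have Ks: "K \<subseteq> dom_endo f \<union> (\<lambda>j. j + ?n) ` dom_endo g"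
    using ideal_sub[OF K] by (simp only: length_shcat split_range)
  show "K = (K \<inter> dom_endo f) \<union> (\<lambda>j. j + ?n) ` {j\<in>dom_endo g. j + ?n \<in> K}"
    using Ks by blast
qed

lemma ideal_shcat_union:
  assumes ef: "is_endo f" and eg: "is_endo g" and I: "is_ideal f I" and J: "is_ideal g J"
  shows "is_ideal (shcat f g) (I \<union> (\<lambda>j. j + length f) ` J)"
  unfolding is_ideal_def
proof (intro conjI ballI impI)
  let ?n = "length f" and ?K = "I \<union> (\<lambda>j. j + length f) ` J"
  have dom: "dom_endo (shcat f g) = dom_endo f \<union> (\<lambda>j. j + ?n) ` dom_endo g"
    by (simp only: length_shcat split_range)
  show "?K \<subseteq> dom_endo (shcat f g)" using ideal_sub[OF I] ideal_sub[OF J] dom by blast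
  fix j assume j: "j \<in> dom_endo (shcat f g)" and a: "ap (shcat f g) j \<in> ?K"
  consider "j \<in> dom_endo f" | k where "k \<in> dom_endo g" "j = k + ?n" using j dom by blast
  then show "j \<in> ?K"
  proof cases
    case 1
    then have "ap (shcat f g) j = ap f j" "ap f j \<in> dom_endo f"
      using ap_shcat[of j f g] ef by (auto simp: is_endo_ap)
    then have "ap f j \<in> I" using a ideal_sub[OF J] by auto
    then show ?thesis using I 1 unfolding is_ideal_def by blast
  next
    case 2
    then have "ap (shcat f g) j = ap g k + ?n" "ap g k \<in> dom_endo g"
      using ap_shcat[of j f g] eg by (auto simp: is_endo_ap)
    then have "ap g k \<in> J" using a ideal_sub[OF I] by auto
    then show ?thesis using J 2 unfolding is_ideal_def by blast
  qed
qed

lemma shcat_ideals_bij: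
  assumes ef: "is_endo f" and eg: "is_endo g"
  shows "bij_betw (\<lambda>(I, J). I \<union> (\<lambda>j. j + length f) ` J) (ideals f \<times> ideals g) (ideals (shcat f g))"
proof (rule bij_betw_imageI)
  let ?n = "length f"
  let ?\<chi> = "\<lambda>(I, J). I \<union> (\<lambda>j. j + ?n) ` J"
  have low: "(I \<union> (\<lambda>j. j + ?n) ` J) \<inter> dom_endo f = I"
    if "I \<subseteq> dom_endo f" "J \<subseteq> dom_endo g" for I J
    using that by auto
  have high: "{j\<in>dom_endo g. j + ?n \<in> I \<union> (\<lambda>j. j + ?n) ` J} = J"
    if "I \<subseteq> dom_endo f" "J \<subseteq> dom_endo g" for I J
    using that by auto
  show "inj_on ?\<chi> (ideals f \<times> ideals g)"
  proof (rule inj_onI)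
    fix p q assume p: "p \<in> ideals f \<times> ideals g" and q: "q \<in> ideals f \<times> ideals g"
      and e: "?\<chi> p = ?\<chi> q"
    obtain I J I' J' where pq: "p = (I, J)" "q = (I', J')" by fastforce
    have sub: "I \<subseteq> dom_endo f" "J \<subseteq> dom_endo g" "I' \<subseteq> dom_endo f" "J' \<subseteq> dom_endo g"
      using p q pq ideal_sub by auto
    have e': "I \<union> (\<lambda>j. j + ?n) ` J = I' \<union> (\<lambda>j. j + ?n) ` J'" using e pq by simp
    have "I = I'" using low[OF sub(1,2)] low[OF sub(3,4)] e' by simp
    moreover have "J = J'" using high[OF sub(1,2)] high[OF sub(3,4)] e' by simp
    ultimately show "p = q" using pq by simp
  qed
  show "?\<chi> ` (ideals f \<times> ideals g) = ideals (shcat f g)"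
  proof
    show "?\<chi> ` (ideals f \<times> ideals g) \<subseteq> ideals (shcat f g)"
    proof
      fix K assume "K \<in> ?\<chi> ` (ideals f \<times> ideals g)"
      then obtain I J where IJ: "is_ideal f I" "is_ideal g J" and K: "K = I \<union> (\<lambda>j. j + ?n) ` J"
        by auto
      show "K \<in> ideals (shcat f g)" using ideal_shcat_union[OF ef eg IJ] K by simp
    qed
    show "ideals (shcat f g) \<subseteq> ?\<chi> ` (ideals f \<times> ideals g)"
    proof
      fix K assume "K \<in> ideals (shcat f g)"
      then have h: "is_ideal f (K \<inter> dom_endo f)" "is_ideal g {j\<in>dom_endo g. j + ?n \<in> K}"
        "K = ?\<chi> (K \<inter> dom_endo f, {j\<in>dom_endo g. j + ?n \<in> K})"
        using ideal_shcat_split[of f g K] by simp_all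
      show "K \<in> ?\<chi> ` (ideals f \<times> ideals g)"
      proof (rule rev_image_eqI)
        show "(K \<inter> dom_endo f, {j\<in>dom_endo g. j + ?n \<in> K}) \<in> ideals f \<times> ideals g"
          using h(1,2) by simp
      qed (rule h(3))
    qed
  qed
qed

lemma shcat_parts:
  assumes ef: "is_endo f" and eg: "is_endo g"
    and I: "I \<subseteq> dom_endo f" and J: "J \<subseteq> dom_endo g"
  shows "rpart (shcat f g) (I \<union> (\<lambda>j. j + length f) ` J) = shcat (rpart f I) (rpart g J)"
    and "lpart (shcat f g) (I \<union> (\<lambda>j. j + length f) ` J) = shcat (lpart f I) (lpart g J)"
proof -
  let ?n = "length f"
  show "rpart (shcat f g) (I \<union> (\<lambda>j. j + ?n) ` J) = shcat (rpart f I) (rpart g J)"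
    using stdr_shcat[OF ef eg I J] .
  have shift_disj: "(\<lambda>j. j + ?n) ` dom_endo g \<inter> dom_endo f = {}" by auto
  have "dom_endo (shcat f g) - (I \<union> (\<lambda>j. j + ?n) ` J) =
      (dom_endo f \<union> (\<lambda>j. j + ?n) ` dom_endo g) - (I \<union> (\<lambda>j. j + ?n) ` J)"
    by (simp only: length_shcat split_range)
  also have "\<dots> = (dom_endo f - I) \<union> ((\<lambda>j. j + ?n) ` dom_endo g - (\<lambda>j. j + ?n) ` J)"
    using I J shift_disj by blast
  also have "(\<lambda>j. j + ?n) ` dom_endo g - (\<lambda>j. j + ?n) ` J = (\<lambda>j. j + ?n) ` (dom_endo g - J)"
    by (rule image_set_diff[symmetric]) (simp add: inj_on_def)
  finally have "dom_endo (shcat f g) - (I \<union> (\<lambda>j. j + ?n) ` J) =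
      (dom_endo f - I) \<union> (\<lambda>j. j + ?n) ` (dom_endo g - J)" .
  then show "lpart (shcat f g) (I \<union> (\<lambda>j. j + ?n) ` J) = shcat (lpart f I) (lpart g J)"
    using stdr_shcat[OF ef eg, of "dom_endo f - I" "dom_endo g - J"] by simp
qed

lemma mult_sum:
  fixes G :: "nat list \<Rightarrow> nat list \<Rightarrow> 'a::comm_monoid_add"
  assumes ef: "is_endo f" and eg: "is_endo g"
  shows "(\<Sum>K\<in>ideals (shcat f g). G (lpart (shcat f g) K) (rpart (shcat f g) K))
       = (\<Sum>I\<in>ideals f. \<Sum>J\<in>ideals g. G (shcat (lpart f I) (lpart g J)) (shcat (rpart f I) (rpart g J)))"
proof -
  let ?H = "\<lambda>K. G (lpart (shcat f g) K) (rpart (shcat f g) K)"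
  have "(\<Sum>K\<in>ideals (shcat f g). ?H K) =
      (\<Sum>(I, J)\<in>ideals f \<times> ideals g. ?H (I \<union> (\<lambda>j. j + length f) ` J))"
    using sum.reindex_bij_betw[OF shcat_ideals_bij[OF ef eg], of ?H] by (simp add: case_prod_unfold)
  also have "\<dots> = (\<Sum>(I, J)\<in>ideals f \<times> ideals g.
      G (shcat (lpart f I) (lpart g J)) (shcat (rpart f I) (rpart g J)))"
  proof (rule sum.cong[OF refl])
    fix p assume p: "p \<in> ideals f \<times> ideals g"
    obtain I J where pIJ: "p = (I, J)" by fastforce
    have "I \<subseteq> dom_endo f" "J \<subseteq> dom_endo g" using p pIJ ideal_sub by auto
    from shcat_parts[OF ef eg this] show "(case p of (I, J) \<Rightarrow> ?H (I \<union> (\<lambda>j. j + length f) ` J)) =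
        (case p of (I, J) \<Rightarrow> G (shcat (lpart f I) (lpart g J)) (shcat (rpart f I) (rpart g J)))"
      unfolding pIJ prod.case by (simp only:)
  qed
  also have "\<dots> = (\<Sum>I\<in>ideals f. \<Sum>J\<in>ideals g.
      G (shcat (lpart f I) (lpart g J)) (shcat (rpart f I) (rpart g J)))"
    by (simp add: sum.cartesian_product)
  finally show ?thesis .
qed

section \<open>The series S^f\<close>

lemma SA_len: "Sgen valid prec f x \<noteq> (0::'k::field) \<Longrightarrow> length x = length f"
  by (simp add: Sgen_def compat_def split: if_splits)

lemma SA_Nil: "(SA [] :: letter list \<Rightarrow> 'k::field) = series_one"
proof
  fix w :: "letter list"
  show "(SA [] w :: 'k) = series_one w"
    by (cases w) (auto simp: Sgen_def compat_def series_one_def)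
qed

text \<open>The witness word of f has at position j the letter
  a_{f(j),j} if f(j) \<noteq> j and a_{n+1,j} otherwise; it is f-compatible, and it is g-compatible
  only if every non-fixed point of g is a non-fixed point of f with the same image.\<close>

definition witness_src :: "nat list \<Rightarrow> nat \<Rightarrow> nat" where
  "witness_src f j = (if ap f j \<noteq> j then ap f j else length f + 1)"

definition witness_word :: "nat list \<Rightarrow> letter list" where
  "witness_word f = map (\<lambda>i. (witness_src f (Suc i), Suc i)) [0..<length f]"

text \<open>The non-fixed points of f; their number decreases strictly along compatibility.\<close>
definition moved :: "nat list \<Rightarrow> nat set" where
  "moved f = {j\<in>{1..length f}. ap f j \<noteq> j}"

lemma witness_word_nth: "j \<in> {1..length f} \<Longrightarrow> witness_word f ! (j - 1) = (witness_src f j, j)"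
  by (auto simp: witness_word_def)

lemma length_witness_word[simp]: "length (witness_word f) = length f" by (simp add: witness_word_def)

lemma SA_witness_word_self:
  assumes ef: "is_endo f"
  shows "(SA f (witness_word f) :: 'k::field) = 1"
proof -
  have ran: "\<And>j. j \<in> {1..length f} \<Longrightarrow> ap f j \<in> {1..length f}" using ef by (simp add: is_endo_ap)
  have v: "\<forall>x\<in>set (witness_word f). validA x"
  proof
    fix x assume "x \<in> set (witness_word f)"
    then obtain i where i: "i < length f" "x = (witness_src f (Suc i), Suc i)" by (auto simp: witness_word_def)
    have "Suc i \<in> {1..length f}" using i by simp
    then show "validA x" using i ran[of "Suc i"] by (auto simp: validA_def witness_src_def)
  qed
  have c: "compat precA f (witness_word f)"
    unfolding compat_def
  proof (intro conjI ballI impI)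
    show "length (witness_word f) = length f" by simp
  next
    fix j assume j: "j \<in> {1..length f}" and ne: "ap f j \<noteq> j"
    have "witness_word f ! (ap f j - 1) = (witness_src f (ap f j), ap f j)" using witness_word_nth[OF ran[OF j]] .
    moreover have "witness_word f ! (j - 1) = (witness_src f j, j)" using witness_word_nth[OF j] .
    ultimately show "precA (witness_word f ! (ap f j - 1)) (witness_word f ! (j - 1))" using ne by (simp add: precA_def witness_src_def)
  qed
  show ?thesis using v c by (simp add: Sgen_def)
qed

lemma SA_witness_word_other:
  assumes ef: "is_endo f" and eg: "is_endo g" and nz: "(SA g (witness_word f) :: 'k::field) \<noteq> 0"
  shows "length g = length f" "\<And>j. j \<in> {1..length f} \<Longrightarrow> ap g j \<noteq> j \<Longrightarrow> ap g j = ap f j \<and> ap f j \<noteq> j"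
proof -
  have c: "compat precA g (witness_word f)" using nz by (simp add: Sgen_def split: if_splits)
  then show l: "length g = length f" by (simp add: compat_def)
  fix j assume j: "j \<in> {1..length f}" and ne: "ap g j \<noteq> j"
  have a: "ap g j \<in> {1..length f}" using eg j l by (simp add: is_endo_ap)
  have "precA (witness_word f ! (ap g j - 1)) (witness_word f ! (j - 1))" using c j ne l by (simp add: compat_def)
  then have "ap g j = witness_src f j" using witness_word_nth[OF a] witness_word_nth[OF j] by (simp add: precA_def)
  then show "ap g j = ap f j \<and> ap f j \<noteq> j" using a by (auto simp: witness_src_def split: if_splits)
qed

lemma list_eq_ap: "length g = length f \<Longrightarrow> (\<forall>j\<in>{1..length f}. ap g j = ap f j) \<Longrightarrow> g = f"
proof (rule nth_equalityI)
  fix i assume l: "length g = length f" and h: "\<forall>j\<in>{1..length f}. ap g j = ap f j" and i: "i < length g"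
  have "ap g (Suc i) = ap f (Suc i)" using h i l by simp
  then show "g ! i = f ! i" by (simp add: ap_def)
qed

lemma moved_less:
  assumes ef: "is_endo f" and eg: "is_endo g" and nz: "(SA g (witness_word f) :: 'k::field) \<noteq> 0" and ne: "g \<noteq> f"
  shows "card (moved g) < card (moved f)"
proof -
  note o = SA_witness_word_other[OF ef eg nz]
  have sub: "moved g \<subseteq> moved f" using o by (auto simp: moved_def)
  have "moved g \<noteq> moved f"
  proof
    assume eq: "moved g = moved f"
    have "\<forall>j\<in>{1..length f}. ap g j = ap f j"
    proof
      fix j assume j: "j \<in> {1..length f}"
      show "ap g j = ap f j"
      proof (cases "ap g j = j")
        case True
        then have "j \<notin> moved g" by (simp add: moved_def)
        then have "j \<notin> moved f" using eq by simp
        then show ?thesis using True j by (simp add: moved_def)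
      next
        case False then show ?thesis using o(2)[OF j] by simp
      qed
    qed
    then have "g = f" using list_eq_ap o(1) by blast
    then show False using ne by simp
  qed
  then have "moved g \<subset> moved f" using sub by auto
  moreover have "finite (moved f)" by (simp add: moved_def)
  ultimately show ?thesis by (simp add: psubset_card_mono)
qed

text \<open>In a vanishing combination, evaluate at the witness word of a term with a minimal
  number of moved points: all other terms vanish there.\<close>
theorem lin_indep:
  fixes F :: "nat list set" and c :: "nat list \<Rightarrow> 'k::field"
  assumes fin: "finite F" and nth_elem: "\<forall>f\<in>F. is_endo f" and z: "\<forall>w. (\<Sum>f\<in>F. c f * SA f w) = 0"
  shows "\<forall>f\<in>F. c f = 0"
proof (rule ccontr)
  assume "\<not> (\<forall>f\<in>F. c f = 0)"
  then obtain f1 where "f1 \<in> F" "c f1 \<noteq> 0" by blast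
  then obtain f0 where f0: "f0 \<in> F \<and> c f0 \<noteq> 0" and mn: "\<forall>g. g \<in> F \<and> c g \<noteq> 0 \<longrightarrow> card (moved f0) \<le> card (moved g)"
    using ex_has_least_nat[of "\<lambda>f. f \<in> F \<and> c f \<noteq> 0" f1 "\<lambda>f. card (moved f)"] by blast
  have ef0: "is_endo f0" using nth_elem f0 by blast
  have "(\<Sum>f\<in>F. c f * (SA f (witness_word f0) :: 'k)) = c f0 * SA f0 (witness_word f0) + (\<Sum>f\<in>F - {f0}. c f * SA f (witness_word f0))"
    by (rule sum.remove[OF fin]) (use f0 in blast)
  also have "(\<Sum>f\<in>F - {f0}. c f * (SA f (witness_word f0) :: 'k)) = 0"
  proof (rule sum.neutral, rule ballI)
    fix g assume g: "g \<in> F - {f0}"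
    show "c g * (SA g (witness_word f0) :: 'k) = 0"
    proof (rule ccontr)
      assume "c g * (SA g (witness_word f0) :: 'k) \<noteq> 0"
      then have cg: "c g \<noteq> 0" and sg: "(SA g (witness_word f0) :: 'k) \<noteq> 0" by auto
      have "card (moved g) < card (moved f0)" using moved_less[OF ef0 _ sg] nth_elem g by auto
      moreover have "card (moved f0) \<le> card (moved g)" using mn g cg by auto
      ultimately show False by simp
    qed
  qed
  also have "(SA f0 (witness_word f0) :: 'k) = 1" by (rule SA_witness_word_self[OF ef0])
  finally have "(\<Sum>f\<in>F. c f * (SA f (witness_word f0) :: 'k)) = c f0" by simp
  then show False using z f0 by simp
qed

lemma compat_shcat:
  assumes ef: "is_endo f" and eg: "is_endo g" and len: "length w = length f + length g"
  shows "compat prec (shcat f g) w \<longleftrightarrow>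
    compat prec f (take (length f) w) \<and> compat prec g (drop (length f) w)"
proof -
  let ?n = "length f" and ?m = "length g"
  define P where "P j = (ap (shcat f g) j \<noteq> j \<longrightarrow> prec (w ! (ap (shcat f g) j - 1)) (w ! (j - 1)))" for j
  have "compat prec (shcat f g) w \<longleftrightarrow> (\<forall>j\<in>{1..?n+?m}. P j)"
    using len by (simp add: compat_def P_def)
  also have "\<dots> \<longleftrightarrow> (\<forall>j\<in>{1..?n}. P j) \<and> (\<forall>j\<in>{1..?m}. P (j + ?n))"
    unfolding split_range by blast
  also have "(\<forall>j\<in>{1..?n}. P j) \<longleftrightarrow> compat prec f (take ?n w)"
  proof -
    have "P j = (ap f j \<noteq> j \<longrightarrow> prec (take ?n w ! (ap f j - 1)) (take ?n w ! (j - 1)))"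
      if j: "j \<in> {1..?n}" for j
    proof -
      have a: "ap (shcat f g) j = ap f j" using ap_shcat[of j f g] j by auto
      have b: "ap f j \<in> {1..?n}" using ef j by (simp add: is_endo_ap)
      show ?thesis unfolding P_def a using b j by auto
    qed
    then show ?thesis using len by (simp add: compat_def)
  qed
  also have "(\<forall>j\<in>{1..?m}. P (j + ?n)) \<longleftrightarrow> compat prec g (drop ?n w)"
  proof -
    have "P (j + ?n) = (ap g j \<noteq> j \<longrightarrow> prec (drop ?n w ! (ap g j - 1)) (drop ?n w ! (j - 1)))"
      if j: "j \<in> {1..?m}" for j
    proof -
      have a: "ap (shcat f g) (j + ?n) = ap g j + ?n" using ap_shcat[of "j + ?n" f g] j by auto
      have b: "ap g j \<in> {1..?m}" using eg j by (simp add: is_endo_ap)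
      have c1: "w ! (ap g j + ?n - 1) = drop ?n w ! (ap g j - 1)" using b len by (simp add: add.commute)
      have c2: "w ! (j + ?n - 1) = drop ?n w ! (j - 1)" using j len by (simp add: add.commute)
      show ?thesis unfolding P_def a c1 c2 by auto
    qed
    then show ?thesis using len by (simp add: compat_def)
  qed
  finally show ?thesis .
qed

lemma SA_shcat:
  assumes ef: "is_endo f" and eg: "is_endo g" and len: "length w = length f + length g"
  shows "(Sgen valid prec (shcat f g) w :: 'k::field) =
    Sgen valid prec f (take (length f) w) * Sgen valid prec g (drop (length f) w)"
proof -
  have v: "(\<forall>x\<in>set w. valid x) \<longleftrightarrow> (\<forall>x\<in>set (take (length f) w). valid x) \<and> (\<forall>x\<in>set (drop (length f) w). valid x)"
  proof -
    have "set (take (length f) w @ drop (length f) w) = set (take (length f) w) \<union> set (drop (length f) w)"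
      by (rule set_append)
    then have "set w = set (take (length f) w) \<union> set (drop (length f) w)" by simp
    then show ?thesis by blast
  qed
  show ?thesis using compat_shcat[OF ef eg len, of prec] v by (simp add: Sgen_def)
qed

text \<open>Only the cut after the first length(f) letters contributes: S^f S^g = S^{f \<bullet> g}.\<close>
lemma series_mult_SA:
  assumes ef: "is_endo f" and eg: "is_endo g"
  shows "series_mult (Sgen valid prec f) (Sgen valid prec g) = (Sgen valid prec (shcat f g) :: _ \<Rightarrow> 'k::field)"
proof
  fix w
  let ?n = "length f" and ?m = "length g"
  have "series_mult (Sgen valid prec f) (Sgen valid prec g) w =
     (\<Sum>k\<le>length w. if k = ?n then (Sgen valid prec f (take ?n w) * Sgen valid prec g (drop ?n w) :: 'k) else 0)"
    unfolding series_mult_def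
  proof (rule sum.cong[OF refl])
    fix k assume k: "k \<in> {..length w}"
    show "(Sgen valid prec f (take k w) * Sgen valid prec g (drop k w) :: 'k) =
       (if k = ?n then Sgen valid prec f (take ?n w) * Sgen valid prec g (drop ?n w) else 0)"
    proof (cases "k = ?n")
      case False
      then have "length (take k w) \<noteq> ?n" using k by simp
      then have "(Sgen valid prec f (take k w) :: 'k) = 0" using SA_len by blast
      then show ?thesis using False by simp
    qed simp
  qed
  also have "\<dots> = (if ?n \<le> length w then Sgen valid prec f (take ?n w) * Sgen valid prec g (drop ?n w) else 0)"
    by simp
  also have "\<dots> = Sgen valid prec (shcat f g) w"
  proof (cases "length w = ?n + ?m")
    case True
    then show ?thesis by (simp add: SA_shcat[OF ef eg True])
  next
    case False
    have r: "(Sgen valid prec (shcat f g) w :: 'k) = 0" using SA_len[of valid prec "shcat f g" w] False by auto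
    show ?thesis
    proof (cases "?n \<le> length w")
      case True
      then have "length (drop ?n w) \<noteq> ?m" using False by simp
      then have "(Sgen valid prec g (drop ?n w) :: 'k) = 0" using SA_len by blast
      then show ?thesis using r by simp
    qed (use r in simp)
  qed
  finally show "series_mult (Sgen valid prec f) (Sgen valid prec g) w = (Sgen valid prec (shcat f g) w :: 'k)" .
qed

text \<open>EFSym contains every finite combination of series S^{h a} with all h a endofunctions:
  coefficients of equal endofunctions are collected.\<close>
lemma EFSym_sum:
  fixes c :: "'i \<Rightarrow> 'k::field" and h :: "'i \<Rightarrow> nat list"
  assumes finA: "finite A" and endo: "\<forall>a\<in>A. is_endo (h a)"
  shows "(\<lambda>w. \<Sum>a\<in>A. c a * SA (h a) w) \<in> EFSym"
proof -
  define e where "e g = (\<Sum>a\<in>{a\<in>A. h a = g}. c a)" for g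
  have finH: "finite (h ` A)" using finA by simp
  have eH: "{g. e g \<noteq> 0} \<subseteq> h ` A"
  proof
    fix g assume g: "g \<in> {g. e g \<noteq> 0}"
    have "{a\<in>A. h a = g} \<noteq> {}"
    proof
      assume "{a\<in>A. h a = g} = {}"
      then have "e g = 0" unfolding e_def by (simp only: sum.empty)
      then show False using g by simp
    qed
    then show "g \<in> h ` A" by blast
  qed
  have "(\<lambda>w. \<Sum>a\<in>A. c a * SA (h a) w) = (\<lambda>w. \<Sum>g\<in>{g. e g \<noteq> 0}. e g * (SA g w :: 'k))"
  proof
    fix w
    have "(\<Sum>a\<in>A. c a * (SA (h a) w :: 'k)) = (\<Sum>g\<in>h ` A. \<Sum>a\<in>{a\<in>A. h a = g}. c a * SA (h a) w)"
      by (rule sum.image_gen[OF finA])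
    also have "\<dots> = (\<Sum>g\<in>h ` A. e g * SA g w)"
      unfolding e_def by (intro sum.cong refl) (simp add: sum_distrib_right)
    also have "\<dots> = (\<Sum>g\<in>{g. e g \<noteq> 0}. e g * SA g w)"
      by (rule sum.mono_neutral_right[OF finH eH]) auto
    finally show "(\<Sum>a\<in>A. c a * (SA (h a) w :: 'k)) = (\<Sum>g\<in>{g. e g \<noteq> 0}. e g * SA g w)" .
  qed
  moreover have "finite {g. e g \<noteq> 0}" using finite_subset[OF eH finH] .
  moreover have "\<forall>g. e g \<noteq> 0 \<longrightarrow> is_endo g" using eH endo by blast
  ultimately show ?thesis unfolding EFSym_def by blast
qed

lemma series_one_EFSym: "(series_one :: letter list \<Rightarrow> 'k::field) \<in> EFSym"
proof -
  have "(\<lambda>w. \<Sum>f\<in>{[]}. 1 * SA f w) \<in> (EFSym :: (letter list \<Rightarrow> 'k) set)"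
    by (rule EFSym_sum) (simp_all add: is_endo_def)
  then show ?thesis by (simp add: SA_Nil)
qed

lemma series_mult_lin:
  fixes c :: "'i \<Rightarrow> 'k::field" and d :: "'j \<Rightarrow> 'k"
  shows "series_mult (\<lambda>w. \<Sum>a\<in>A. c a * u a w) (\<lambda>w. \<Sum>b\<in>B. d b * v b w) =
     (\<lambda>w. \<Sum>a\<in>A. \<Sum>b\<in>B. c a * d b * series_mult (u a) (v b) w)"
proof
  fix w
  have "series_mult (\<lambda>w. \<Sum>a\<in>A. c a * u a w) (\<lambda>w. \<Sum>b\<in>B. d b * v b w) w
     = (\<Sum>k\<le>length w. \<Sum>a\<in>A. \<Sum>b\<in>B. c a * d b * (u a (take k w) * v b (drop k w)))"
    by (simp add: series_mult_def sum_product mult_ac)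
  also have "\<dots> = (\<Sum>a\<in>A. \<Sum>b\<in>B. \<Sum>k\<le>length w. c a * d b * (u a (take k w) * v b (drop k w)))"
    by (subst sum.swap, rule sum.cong[OF refl], rule sum.swap)
  also have "\<dots> = (\<Sum>a\<in>A. \<Sum>b\<in>B. c a * d b * series_mult (u a) (v b) w)"
    by (simp add: series_mult_def sum_distrib_left)
  finally show "series_mult (\<lambda>w. \<Sum>a\<in>A. c a * u a w) (\<lambda>w. \<Sum>b\<in>B. d b * v b w) w =
     (\<Sum>a\<in>A. \<Sum>b\<in>B. c a * d b * series_mult (u a) (v b) w)" .
qed

lemma EFSym_mult:
  assumes F: "F \<in> (EFSym :: (letter list \<Rightarrow> 'k::field) set)" and G: "G \<in> EFSym"
  shows "series_mult F G \<in> EFSym"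
proof -
  obtain c :: "nat list \<Rightarrow> 'k" where c: "finite {f. c f \<noteq> 0}" "\<forall>f. c f \<noteq> 0 \<longrightarrow> is_endo f"
    "F = (\<lambda>w. \<Sum>f\<in>{f. c f \<noteq> 0}. c f * SA f w)" using F unfolding EFSym_def by blast
  obtain d :: "nat list \<Rightarrow> 'k" where d: "finite {f. d f \<noteq> 0}" "\<forall>f. d f \<noteq> 0 \<longrightarrow> is_endo f"
    "G = (\<lambda>w. \<Sum>f\<in>{f. d f \<noteq> 0}. d f * SA f w)" using G unfolding EFSym_def by blast
  let ?A = "{f. c f \<noteq> 0}" and ?B = "{f. d f \<noteq> 0}"
  have "series_mult F G = (\<lambda>w. \<Sum>f\<in>?A. \<Sum>g\<in>?B. c f * d g * series_mult (SA f) (SA g) w)"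
    unfolding c(3) d(3) by (rule series_mult_lin)
  also have "\<dots> = (\<lambda>w. \<Sum>p\<in>?A \<times> ?B. (c (fst p) * d (snd p)) * SA (shcat (fst p) (snd p)) w)"
    using c(2) d(2) by (simp add: series_mult_SA sum.cartesian_product case_prod_beta)
  also have "\<dots> \<in> EFSym"
    by (rule EFSym_sum) (use c d endo_shcat in auto)
  finally show ?thesis .
qed

text \<open>positions P w is the set of (1-based) positions of w whose letter satisfies P; the
  letters of A \<oplus> B are Inl a (from A) and Inr b (from B).\<close>

definition positions :: "('a \<Rightarrow> bool) \<Rightarrow> 'a list \<Rightarrow> nat set" where
  "positions P w = {i\<in>{1..length w}. P (w ! (i - 1))}"

lemma positions_sub: "positions P w \<subseteq> {1..length w}" by (auto simp: positions_def)
lemma finite_positions: "finite (positions P w)" using positions_sub finite_subset by blast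

lemma positions_shift: "{i\<in>{1..m}. P (w ! (i - 1))} = Suc ` {j. j < m \<and> P (w ! j)}"
proof
  show "{i\<in>{1..m}. P (w ! (i - 1))} \<subseteq> Suc ` {j. j < m \<and> P (w ! j)}"
  proof
    fix i assume i: "i \<in> {i\<in>{1..m}. P (w ! (i - 1))}"
    then have "i = Suc (i - 1)" "i - 1 < m" "P (w ! (i - 1))" by auto
    then show "i \<in> Suc ` {j. j < m \<and> P (w ! j)}" by blast
  qed
qed auto

lemma card_shift: "card {i\<in>{1..m}. P (w ! (i - 1))} = card {j. j < m \<and> P (w ! j)}"
  unfolding positions_shift by (simp add: card_image)

lemma card_positions: "card (positions P w) = length (filter P w)"
  unfolding positions_def card_shift by (simp add: length_filter_conv_card)

lemma filter_take_card: "i \<le> length w \<Longrightarrow> length (filter P (take i w)) = card {j. j < i \<and> P (w ! j)}"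
proof -
  assume i: "i \<le> length w"
  have "length (filter P (take i w)) = card {j. j < length (take i w) \<and> P (take i w ! j)}"
    by (rule length_filter_conv_card)
  also have "{j. j < length (take i w) \<and> P (take i w ! j)} = {j. j < i \<and> P (w ! j)}"
    using i by auto
  finally show ?thesis .
qed

lemma nth_filter_cnt: "i < length w \<Longrightarrow> P (w ! i) \<Longrightarrow> filter P w ! length (filter P (take i w)) = w ! i"
proof (induction w arbitrary: i)
  case Nil then show ?case by simp
next
  case (Cons x w)
  show ?case
  proof (cases i)
    case 0 then show ?thesis using Cons by simp
  next
    case (Suc k)
    then have "k < length w" "P (w ! k)" using Cons.prems by auto
    then show ?thesis using Cons.IH Suc by simp
  qed
qed

lemma rank_positions:
  assumes i: "i \<in> positions P w"
  shows "rank (positions P w) i = Suc (length (filter P (take (i - 1) w)))"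
proof -
  have i1: "1 \<le> i" "i \<le> length w" "P (w ! (i - 1))" using i by (auto simp: positions_def)
  have "{y \<in> positions P w. y \<le> i} = {k\<in>{1..i}. P (w ! (k - 1))}" using i1 by (auto simp: positions_def)
  then have "rank (positions P w) i = card {k\<in>{1..i}. P (w ! (k - 1))}" unfolding rank_def by simp
  also have "\<dots> = card {j. j < i \<and> P (w ! j)}" by (rule card_shift)
  also have "{j. j < i \<and> P (w ! j)} = insert (i - 1) {j. j < i - 1 \<and> P (w ! j)}" using i1 by auto
  also have "card \<dots> = Suc (card {j. j < i - 1 \<and> P (w ! j)})" by simp
  also have "card {j. j < i - 1 \<and> P (w ! j)} = length (filter P (take (i - 1) w))"
    using filter_take_card[of "i - 1" w P] i1 by simp
  finally show ?thesis .
qed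

lemma nth_positions:
  assumes i: "i \<in> positions P w"
  shows "filter P w ! (rank (positions P w) i - 1) = w ! (i - 1)"
  using rank_positions[OF i] nth_filter_cnt[of "i - 1" w P] i by (auto simp: positions_def)

lemma nth_positions_nth_elem:
  assumes j: "j \<in> {1..card (positions P w)}"
  shows "filter P w ! (j - 1) = w ! (nth_elem (positions P w) j - 1)"
proof -
  let ?X = "positions P w"
  have i: "nth_elem ?X j \<in> ?X" using nth_elem_in[OF finite_positions j] .
  have "rank ?X (nth_elem ?X j) = j" using rank_enum[OF nth_elem_props[OF finite_positions] j] .
  then show ?thesis using nth_positions[OF i] by simp
qed

definition lproj :: "('a + 'b) list \<Rightarrow> 'a list" where "lproj w = map projl (filter isl w)"
definition rproj :: "('a + 'b) list \<Rightarrow> 'b list" where "rproj w = map projr (filter (\<lambda>x. \<not> isl x) w)"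

lemma lproj_simps[simp]: "lproj [] = []" "lproj (Inl a # w) = a # lproj w" "lproj (Inr b # w) = lproj w"
  by (simp_all add: lproj_def)
lemma rproj_simps[simp]: "rproj [] = []" "rproj (Inl a # w) = rproj w" "rproj (Inr b # w) = b # rproj w"
  by (simp_all add: rproj_def)

lemma shuffles_iff: "w \<in> shuffles (map Inl u) (map Inr v) \<longleftrightarrow> lproj w = u \<and> rproj w = v"
proof (induction w arbitrary: u v)
  case Nil then show ?case by auto
next
  case (Cons x w)
  show ?case
  proof (cases x)
    case (Inl a)
    have "x # w \<in> shuffles (map Inl u) (map Inr v) \<longleftrightarrow> (u \<noteq> [] \<and> hd u = a \<and> w \<in> shuffles (map Inl (tl u)) (map Inr v))"
      using Inl by (auto simp: Cons_in_shuffles_iff map_tl hd_map)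
    also have "\<dots> \<longleftrightarrow> (u \<noteq> [] \<and> hd u = a \<and> lproj w = tl u \<and> rproj w = v)" using Cons.IH by simp
    also have "\<dots> \<longleftrightarrow> lproj (x # w) = u \<and> rproj (x # w) = v" using Inl by (cases u) auto
    finally show ?thesis .
  next
    case (Inr b)
    have "x # w \<in> shuffles (map Inl u) (map Inr v) \<longleftrightarrow> (v \<noteq> [] \<and> hd v = b \<and> w \<in> shuffles (map Inl u) (map Inr (tl v)))"
      using Inr by (auto simp: Cons_in_shuffles_iff map_tl hd_map)
    also have "\<dots> \<longleftrightarrow> (v \<noteq> [] \<and> hd v = b \<and> lproj w = u \<and> rproj w = tl v)" using Cons.IH by simp
    also have "\<dots> \<longleftrightarrow> lproj (x # w) = u \<and> rproj (x # w) = v" using Inr by (cases v) auto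
    finally show ?thesis .
  qed
qed

fun merge :: "bool list \<Rightarrow> 'a list \<Rightarrow> 'b list \<Rightarrow> ('a + 'b) list" where
  "merge [] u v = []"
| "merge (b # bs) u v = (if b then Inr (hd v) # merge bs u (tl v) else Inl (hd u) # merge bs (tl u) v)"

lemma merge_props:
  "length (filter id bs) = length v \<Longrightarrow> length (filter Not bs) = length u \<Longrightarrow>
   lproj (merge bs u v) = u \<and> rproj (merge bs u v) = v \<and> map (\<lambda>x. \<not> isl x) (merge bs u v) = bs"
proof (induction bs arbitrary: u v)
  case Nil then show ?case by simp
next
  case (Cons b bs)
  show ?case
  proof (cases b)
    case True
    then obtain y v' where v: "v = y # v'" using Cons.prems by (cases v) auto
    then show ?thesis using Cons True by simp
  next
    case False
    then obtain y u' where u: "u = y # u'" using Cons.prems by (cases u) auto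
    then show ?thesis using Cons False by simp
  qed
qed

lemma rank_le_card: "finite X \<Longrightarrow> rank X i \<le> card X"
  unfolding rank_def by (rule card_mono) auto

lemma isl_cases: "isl x \<Longrightarrow> x = Inl (projl x)" "\<not> isl x \<Longrightarrow> x = Inr (projr x)"
  by (cases x; simp)+

lemma nth_via_proj:
  assumes i: "i < length w"
  shows "w ! i = (if isl (w ! i) then Inl (lproj w ! (rank (positions isl w) (Suc i) - 1))
                  else Inr (rproj w ! (rank (positions (\<lambda>x. \<not> isl x) w) (Suc i) - 1)))"
proof (cases "isl (w ! i)")
  case True
  have p: "Suc i \<in> positions isl w" using i True by (simp add: positions_def)
  have k: "rank (positions isl w) (Suc i) - 1 < length (filter isl w)"
    using rank_positions[OF p] rank_le_card[OF finite_positions, of isl w "Suc i"] card_positions[of isl w] by simp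
  have "filter isl w ! (rank (positions isl w) (Suc i) - 1) = w ! i" using nth_positions[OF p] by simp
  then show ?thesis using True k isl_cases(1)[OF True] by (simp add: lproj_def)
next
  case False
  have p: "Suc i \<in> positions (\<lambda>x. \<not> isl x) w" using i False by (simp add: positions_def)
  have k: "rank (positions (\<lambda>x. \<not> isl x) w) (Suc i) - 1 < length (filter (\<lambda>x. \<not> isl x) w)"
    using rank_positions[OF p] rank_le_card[OF finite_positions, of "\<lambda>x. \<not> isl x" w "Suc i"] card_positions[of "\<lambda>x. \<not> isl x" w] by simp
  have "filter (\<lambda>x. \<not> isl x) w ! (rank (positions (\<lambda>x. \<not> isl x) w) (Suc i) - 1) = w ! i" using nth_positions[OF p] by simp
  then show ?thesis using False k isl_cases(2)[OF False] by (simp add: rproj_def)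
qed

lemma positions_isl_compl: "positions isl w = {1..length w} - positions (\<lambda>x. \<not> isl x) w"
  by (auto simp: positions_def)

lemma shuffle_positions_inj:
  "inj_on (positions (\<lambda>x. \<not> isl x)) (shuffles (map Inl u) (map Inr v))"
proof (rule inj_onI)
  let ?R = "\<lambda>w. positions (\<lambda>x. \<not> isl x) w"
  fix w1 w2 assume w1: "w1 \<in> shuffles (map Inl u) (map Inr v)"
    and w2: "w2 \<in> shuffles (map Inl u) (map Inr v)" and e: "?R w1 = ?R w2"
  have l: "length w1 = length w2" using w1 w2 length_shuffles by (metis length_map)
  have pp: "lproj w1 = lproj w2" "rproj w1 = rproj w2" using w1 w2 unfolding shuffles_iff by simp_all
  have eL: "positions isl w1 = positions isl w2" using e l by (simp add: positions_isl_compl)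
  show "w1 = w2"
  proof (rule nth_equalityI)
    fix i assume i: "i < length w1"
    have i2: "i < length w2" using i l by simp
    have "Suc i \<in> ?R w1 \<longleftrightarrow> \<not> isl (w1 ! i)" "Suc i \<in> ?R w2 \<longleftrightarrow> \<not> isl (w2 ! i)"
      using i i2 by (simp_all add: positions_def)
    then have ii: "isl (w1 ! i) \<longleftrightarrow> isl (w2 ! i)" using e by simp
    show "w1 ! i = w2 ! i"
      using nth_via_proj[OF i] nth_via_proj[OF i2] ii pp e eL by (simp split: if_splits)
  qed (rule l)
qed

lemma positions_pattern:
  assumes pat: "map P w = bs"
  shows "positions P w = {i\<in>{1..length bs}. bs ! (i - 1)}"
  unfolding positions_def
proof (rule Collect_cong)
  have lw: "length w = length bs" using pat by (metis length_map)
  have nb: "bs ! k = P (w ! k)" if "k < length w" for k using pat that by (metis nth_map)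
  fix i show "(i \<in> {1..length w} \<and> P (w ! (i - 1))) = (i \<in> {1..length bs} \<and> bs ! (i - 1))"
  proof (cases "i \<in> {1..length bs}")
    case True
    then have "i - 1 < length w" using lw by auto
    then show ?thesis using nb[of "i - 1"] lw True by simp
  next
    case False
    then show ?thesis using lw by auto
  qed
qed

lemma shuffle_positions_image:
  assumes len: "length u + length v = n"
  shows "positions (\<lambda>x. \<not> isl x) ` shuffles (map Inl u) (map Inr v) =
    {I. I \<subseteq> {1..n} \<and> card I = length v}"
proof
  let ?W = "shuffles (map Inl u) (map Inr v)"
  show "positions (\<lambda>x. \<not> isl x) ` ?W \<subseteq> {I. I \<subseteq> {1..n} \<and> card I = length v}"
  proof clarify
    fix w assume w: "w \<in> ?W"
    have "length w = n" using w len length_shuffles by (metis length_map)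
    moreover have "rproj w = v" using w shuffles_iff by blast
    ultimately show "positions (\<lambda>x. \<not> isl x) w \<subseteq> {1..n} \<and>
        card (positions (\<lambda>x. \<not> isl x) w) = length v"
      using positions_sub card_positions[of "\<lambda>x. \<not> isl x" w] by (metis length_map rproj_def)
  qed
  show "{I. I \<subseteq> {1..n} \<and> card I = length v} \<subseteq> positions (\<lambda>x. \<not> isl x) ` ?W"
  proof clarify
    fix I assume Is: "I \<subseteq> {1..n}" and cI: "card I = length v"
    define bs where "bs = map (\<lambda>i. Suc i \<in> I) [0..<n]"
    have "I = Suc ` {i. i < n \<and> Suc i \<in> I}"
    proof
      show "I \<subseteq> Suc ` {i. i < n \<and> Suc i \<in> I}"
      proof
        fix x assume x: "x \<in> I"
        then have "1 \<le> x" "x \<le> n" using Is by auto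
        then have "x = Suc (x - 1)" "x - 1 < n" by auto
        then show "x \<in> Suc ` {i. i < n \<and> Suc i \<in> I}" using x by (metis (mono_tags) image_eqI mem_Collect_eq)
      qed
    qed auto
    then have cardI: "card {i. i < n \<and> Suc i \<in> I} = card I"
      by (metis card_image inj_Suc inj_on_subset subset_UNIV)
    have "length (filter id bs) = card {i. i < length bs \<and> id (bs ! i)}"
      by (rule length_filter_conv_card)
    also have "{i. i < length bs \<and> id (bs ! i)} = {i. i < n \<and> Suc i \<in> I}"
      by (auto simp: bs_def)
    finally have f1: "length (filter id bs) = length v" by (simp only: cardI cI)
    have "length (filter id bs) + length (filter (\<lambda>x. \<not> id x) bs) = length bs"
      by (rule sum_length_filter_compl)
    then have f2: "length (filter Not bs) = length u" using f1 len by (simp add: bs_def)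
    define w where "w = merge bs u v"
    have mp: "lproj w = u" "rproj w = v" "map (\<lambda>x. \<not> isl x) w = bs"
      using merge_props[OF f1 f2] w_def by auto
    have "positions (\<lambda>x. \<not> isl x) w = {i\<in>{1..n}. bs ! (i - 1)}"
      using positions_pattern[OF mp(3)] by (simp add: bs_def)
    also have "\<dots> = I"
    proof -
      have "bs ! (i - 1) = (i \<in> I)" if "i \<in> {1..n}" for i using that by (auto simp: bs_def)
      then show ?thesis using Is by auto
    qed
    finally show "I \<in> positions (\<lambda>x. \<not> isl x) ` ?W" using mp shuffles_iff by blast
  qed
qed

lemma compat_std:
  assumes fin: "finite X" and len: "length x = card X"
    and W: "\<forall>j\<in>{1..card X}. x ! (j - 1) = W (nth_elem X j)"
  shows "compat prec (stdr f X) x \<longleftrightarrow> (\<forall>i\<in>X. restr f X i \<noteq> i \<longrightarrow> prec (W (restr f X i)) (W i))"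
proof -
  let ?L = "stdr f X"
  let ?Q = "\<lambda>i. restr f X i \<noteq> i \<longrightarrow> prec (W (restr f X i)) (W i)"
  have lenL: "length ?L = card X" by (rule length_stdr[OF fin])
  have "compat prec ?L x \<longleftrightarrow> (\<forall>j\<in>{1..card X}. ap ?L j \<noteq> j \<longrightarrow> prec (x ! (ap ?L j - 1)) (x ! (j - 1)))"
    using len lenL by (simp add: compat_def)
  also have "\<dots> \<longleftrightarrow> (\<forall>j\<in>{1..card X}. ?Q (nth_elem X j))"
  proof -
    have "(ap ?L j \<noteq> j \<longrightarrow> prec (x ! (ap ?L j - 1)) (x ! (j - 1))) = ?Q (nth_elem X j)" if j: "j \<in> {1..card X}" for j
    proof -
      have p: "ap ?L j \<in> {1..card X}" "nth_elem X (ap ?L j) = restr f X (nth_elem X j)" using std_props_nth_elem(2)[OF fin j] by auto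
      have e1: "x ! (ap ?L j - 1) = W (restr f X (nth_elem X j))" using W p by metis
      have e2: "x ! (j - 1) = W (nth_elem X j)" using W j by blast
      have e3: "(ap ?L j \<noteq> j) = (restr f X (nth_elem X j) \<noteq> nth_elem X j)" using nth_elem_inj_iff[OF fin p(1) j] p(2) by simp
      show ?thesis unfolding e1 e2 e3 ..
    qed
    then show ?thesis by auto
  qed
  also have "\<dots> \<longleftrightarrow> (\<forall>i\<in>nth_elem X ` {1..card X}. ?Q i)" by blast
  also have "\<dots> \<longleftrightarrow> (\<forall>i\<in>X. ?Q i)" using nth_elem_props(2)[OF fin] by simp
  finally show ?thesis .
qed

lemma validAB_iff:
  "(\<forall>x\<in>set w. validAB x) \<longleftrightarrow> (\<forall>x\<in>set (lproj w). validA x) \<and> (\<forall>x\<in>set (rproj w). validA x)"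
proof (induction w)
  case Nil then show ?case by simp
next
  case (Cons x w) then show ?case by (cases x) auto
qed

lemma compat_lproj:
  fixes w :: "('a + 'b) list"
  defines "L \<equiv> positions isl w"
  shows "compat prec (stdr f L) (lproj w) \<longleftrightarrow>
    (\<forall>i\<in>L. restr f L i \<noteq> i \<longrightarrow> prec (projl (w ! (restr f L i - 1))) (projl (w ! (i - 1))))"
proof (rule compat_std[OF finite_positions[of isl w, folded L_def]])
  show "length (lproj w) = card L" by (simp add: lproj_def card_positions L_def)
  show "\<forall>j\<in>{1..card L}. lproj w ! (j - 1) = projl (w ! (nth_elem L j - 1))"
  proof
    fix j assume j: "j \<in> {1..card L}"
    have "j - 1 < length (filter isl w)" using j card_positions[of isl w] L_def by auto
    then show "lproj w ! (j - 1) = projl (w ! (nth_elem L j - 1))"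
      using nth_positions_nth_elem[OF j[unfolded L_def]] L_def by (simp add: lproj_def)
  qed
qed

lemma compat_rproj:
  fixes w :: "('a + 'b) list"
  defines "R \<equiv> positions (\<lambda>x. \<not> isl x) w"
  shows "compat prec (stdr f R) (rproj w) \<longleftrightarrow>
    (\<forall>i\<in>R. restr f R i \<noteq> i \<longrightarrow> prec (projr (w ! (restr f R i - 1))) (projr (w ! (i - 1))))"
proof (rule compat_std[OF finite_positions[of "\<lambda>x. \<not> isl x" w, folded R_def]])
  show "length (rproj w) = card R" by (simp add: rproj_def card_positions R_def)
  show "\<forall>j\<in>{1..card R}. rproj w ! (j - 1) = projr (w ! (nth_elem R j - 1))"
  proof
    fix j assume j: "j \<in> {1..card R}"
    have "j - 1 < length (filter (\<lambda>x. \<not> isl x) w)"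
      using j card_positions[of "\<lambda>x. \<not> isl x" w] R_def by auto
    then show "rproj w ! (j - 1) = projr (w ! (nth_elem R j - 1))"
      using nth_positions_nth_elem[OF j[unfolded R_def]] R_def by (simp add: rproj_def)
  qed
qed

text \<open>Since
  A-letters precede all B-letters and never conversely, an arrow j \<mapsto> f(j) may only go
  from a B-position to a B-position or from an A-position to any position.\<close>
lemma compat_AB_iff:
  assumes ef: "is_endo f" and len: "length w = length f"
  defines "R \<equiv> positions (\<lambda>x. \<not> isl x) w"
  shows "compat precAB f w \<longleftrightarrow>
    is_ideal f R \<and> compat precA (lpart f R) (lproj w) \<and> compat precA (rpart f R) (rproj w)"
proof -
  let ?L = "positions isl w"
  have LR: "dom_endo f - R = ?L" using len by (auto simp: positions_def R_def)
  have Rs: "R \<subseteq> dom_endo f" using positions_sub len R_def by metis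
  define WL where "WL i = projl (w ! (i - 1))" for i
  define WR where "WR i = projr (w ! (i - 1))" for i
  define T where "T j = (ap f j \<noteq> j \<longrightarrow> precAB (w ! (ap f j - 1)) (w ! (j - 1)))" for j
  define Lc where "Lc i = (restr f ?L i \<noteq> i \<longrightarrow> precA (WL (restr f ?L i)) (WL i))" for i
  define Rc where "Rc i = (restr f R i \<noteq> i \<longrightarrow> precA (WR (restr f R i)) (WR i))" for i
  have pointwise: "T j \<longleftrightarrow> (ap f j \<in> R \<longrightarrow> j \<in> R) \<and> (j \<in> ?L \<longrightarrow> Lc j) \<and> (j \<in> R \<longrightarrow> Rc j)"
    if j: "j \<in> dom_endo f" for j
  proof -
    have a: "ap f j \<in> dom_endo f" using ef j by (simp add: is_endo_ap)
    have jLR: "j \<in> ?L \<longleftrightarrow> j \<notin> R" "ap f j \<in> ?L \<longleftrightarrow> ap f j \<notin> R"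
      using j a len by (auto simp: positions_def R_def)
    have wj: "j \<in> ?L \<Longrightarrow> w ! (j - 1) = Inl (WL j)" "j \<in> R \<Longrightarrow> w ! (j - 1) = Inr (WR j)"
      using isl_cases by (auto simp: positions_def WL_def WR_def R_def)
    have wa: "ap f j \<in> ?L \<Longrightarrow> w ! (ap f j - 1) = Inl (WL (ap f j))"
      "ap f j \<in> R \<Longrightarrow> w ! (ap f j - 1) = Inr (WR (ap f j))"
      using isl_cases by (auto simp: positions_def WL_def WR_def R_def)
    have rR: "restr f R j = (if ap f j \<in> R then ap f j else j)"
      and rL: "restr f ?L j = (if ap f j \<in> ?L then ap f j else j)" by (simp_all add: restr_def)
    consider "j \<in> R" "ap f j \<in> R" | "j \<in> R" "ap f j \<in> ?L" | "j \<in> ?L" "ap f j \<in> R"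
      | "j \<in> ?L" "ap f j \<in> ?L" using jLR by blast
    then show ?thesis
    proof cases
      case 1 then show ?thesis using jLR wj wa rR by (auto simp: T_def Rc_def)
    next
      case 2 then show ?thesis using jLR wj wa rR by (auto simp: T_def Rc_def)
    next
      case 3
      then have "ap f j \<noteq> j" using jLR by auto
      then show ?thesis using 3 jLR wj wa rL by (auto simp: T_def Lc_def)
    next
      case 4 then show ?thesis using jLR wj wa rL by (auto simp: T_def Lc_def)
    qed
  qed
  have "compat precAB f w \<longleftrightarrow> (\<forall>j\<in>dom_endo f. T j)" using len by (simp add: compat_def T_def)
  also have "\<dots> \<longleftrightarrow> (\<forall>j\<in>dom_endo f. ap f j \<in> R \<longrightarrow> j \<in> R) \<and> (\<forall>j\<in>?L. Lc j) \<and> (\<forall>j\<in>R. Rc j)"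
  proof -
    have "?L \<subseteq> dom_endo f" using positions_sub len by metis
    then show ?thesis using pointwise Rs by blast
  qed
  also have "\<dots> \<longleftrightarrow> is_ideal f R \<and> compat precA (lpart f R) (lproj w) \<and> compat precA (rpart f R) (rproj w)"
    using compat_lproj[of precA f w] compat_rproj[of precA f w] Rs LR
    by (simp add: is_ideal_def Lc_def Rc_def WL_def WR_def R_def)
  finally show ?thesis .
qed

lemma SAB_decomp:
  assumes ef: "is_endo f" and len: "length w = length f"
  defines "R \<equiv> positions (\<lambda>x. \<not> isl x) w"
  shows "(SAB f w :: 'k::field) =
    (if is_ideal f R then SA (lpart f R) (lproj w) * SA (rpart f R) (rproj w) else 0)"
  using compat_AB_iff[OF ef len] validAB_iff[of w] by (auto simp: Sgen_def R_def)

text \<open>Shuffles correspond to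
  their sets of B-positions, and only ideals contribute.\<close>
theorem shuffle_formula:
  assumes ef: "is_endo f"
  shows "(\<Sum>w\<in>shuffles (map Inl u) (map Inr v). (SAB f w :: 'k::field)) =
    (\<Sum>I\<in>{I. is_ideal f I}. SA (stdr f ({1..length f} - I)) u * SA (stdr f I) v)"
proof -
  let ?W = "shuffles (map Inl u) (map Inr v)"
  let ?R = "positions (\<lambda>x. \<not> isl x)"
  define G where "G I = (SA (lpart f I) u * SA (rpart f I) v :: 'k)" for I
  have Wp: "\<And>w. w \<in> ?W \<Longrightarrow> lproj w = u \<and> rproj w = v \<and> length w = length u + length v"
    using shuffles_iff length_shuffles by (metis length_map)
  have G0: "G I = 0" if "is_ideal f I" "card I \<noteq> length v \<or> length u + length v \<noteq> length f" for I
  proof (rule ccontr)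
    assume "G I \<noteq> 0"
    then have a: "(SA (lpart f I) u :: 'k) \<noteq> 0" "(SA (rpart f I) v :: 'k) \<noteq> 0" by (auto simp: G_def)
    have "length u = length f - card I" using SA_len[OF a(1)] length_lpart that by simp
    moreover have "length v = card I" using SA_len[OF a(2)] length_rpart that by simp
    moreover have "card I \<le> length f"
      using ideal_sub[OF that(1)] by (metis card_atLeastAtMost card_mono diff_Suc_1 finite_atLeastAtMost)
    ultimately show False using that by auto
  qed
  show ?thesis
  proof (cases "length u + length v = length f")
    case False
    have "(\<Sum>w\<in>?W. (SAB f w :: 'k)) = 0"
      by (rule sum.neutral) (use Wp False SA_len in fastforce)
    moreover have "(\<Sum>I\<in>{I. is_ideal f I}. G I) = 0"
      by (rule sum.neutral) (use G0 False in blast)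
    ultimately show ?thesis by (simp add: G_def)
  next
    case True
    define H where "H I = (if is_ideal f I then G I else 0)" for I
    define T where "T = {I. I \<subseteq> dom_endo f \<and> card I = length v}"
    have "(\<Sum>w\<in>?W. (SAB f w :: 'k)) = (\<Sum>w\<in>?W. H (?R w))"
    proof (rule sum.cong[OF refl])
      fix w assume w: "w \<in> ?W"
      then have "length w = length f" using Wp True by simp
      then have "(SAB f w :: 'k) = (if is_ideal f (?R w)
          then SA (lpart f (?R w)) (lproj w) * SA (rpart f (?R w)) (rproj w) else 0)"
        by (rule SAB_decomp[OF ef])
      also have "\<dots> = H (?R w)" using Wp[OF w] by (simp add: H_def G_def del: One_nat_def)
      finally show "(SAB f w :: 'k) = H (?R w)" .
    qed
    also have "\<dots> = (\<Sum>I\<in>?R ` ?W. H I)"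
      using sum.reindex[OF shuffle_positions_inj[of u v], of H] by (simp add: comp_def)
    also have "?R ` ?W = T" using shuffle_positions_image[OF True] by (simp add: T_def)
    also have "(\<Sum>I\<in>T. H I) = (\<Sum>I\<in>{I\<in>T. is_ideal f I}. G I)"
      using finite_subset[of T "Pow (dom_endo f)"] unfolding H_def
      by (intro sum.inter_filter[symmetric]) (auto simp: T_def)
    also have "\<dots> = (\<Sum>I\<in>{I. is_ideal f I}. G I)"
      by (rule sum.mono_neutral_left[OF finite_ideals]) (use G0 ideal_sub in \<open>auto simp: T_def\<close>)
    finally show ?thesis by (simp add: G_def)
  qed
qed

section \<open>The Hopf algebra EFSym\<close>

text \<open>(iv) EFSym is identified, via (i), with the free vector space on the endofunctions.\<close>

lemma bvec_of_bool: "bvec x y = (of_bool (y = x) :: 'k::zero_neq_one)"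
  by (simp add: bvec_def)

lemma supp_bvec: "supp (bvec x :: 'a \<Rightarrow> 'k::zero_neq_one) = {x}"
  by (auto simp: supp_def bvec_def)

lemma lext_sup:
  fixes v :: "'a \<Rightarrow> 'k::field"
  assumes "finite T" "supp v \<subseteq> T"
  shows "lext M v y = (\<Sum>x\<in>T. v x * M x y)"
  unfolding lext_def
  by (rule sum.mono_neutral_left) (use assms in \<open>auto simp: supp_def\<close>)

lemma lfun_sup:
  fixes v :: "'a \<Rightarrow> 'k::field"
  assumes "finite T" "supp v \<subseteq> T"
  shows "lfun phi v = (\<Sum>x\<in>T. v x * phi x)"
  unfolding lfun_def
  by (rule sum.mono_neutral_left) (use assms in \<open>auto simp: supp_def\<close>)

lemma lext_bvec: "lext M (bvec x :: 'a \<Rightarrow> 'k::field) = M x"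
proof
  fix y
  have "supp (bvec x :: 'a \<Rightarrow> 'k) \<subseteq> {x}" by (simp add: supp_bvec)
  from lext_sup[OF _ this] have "lext M (bvec x :: 'a \<Rightarrow> 'k) y = (\<Sum>z\<in>{x}. bvec x z * M z y)" by simp
  then show "lext M (bvec x :: 'a \<Rightarrow> 'k) y = M x y" by (simp add: bvec_def)
qed

lemma lfun_bvec: "lfun phi (bvec x :: 'a \<Rightarrow> 'k::field) = phi x"
proof -
  have "supp (bvec x :: 'a \<Rightarrow> 'k) \<subseteq> {x}" by (simp add: supp_bvec)
  from lfun_sup[OF _ this] have "lfun phi (bvec x :: 'a \<Rightarrow> 'k) = (\<Sum>z\<in>{x}. bvec x z * phi z)" by simp
  then show ?thesis by (simp add: bvec_def)
qed

lemma supp_lin_sub: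
  fixes v :: "'i \<Rightarrow> 'a \<Rightarrow> 'k::field"
  shows "supp (\<lambda>z. \<Sum>i\<in>S. c i * v i z) \<subseteq> (\<Union>i\<in>S. supp (v i))"
proof
  fix z assume "z \<in> supp (\<lambda>z. \<Sum>i\<in>S. c i * v i z)"
  then have "(\<Sum>i\<in>S. c i * v i z) \<noteq> 0" by (simp add: supp_def)
  then obtain i where "i \<in> S" "c i * v i z \<noteq> 0" by (meson sum.neutral)
  then show "z \<in> (\<Union>i\<in>S. supp (v i))" by (auto simp: supp_def)
qed

lemma finite_supp_lin:
  fixes v :: "'i \<Rightarrow> 'a \<Rightarrow> 'k::field"
  assumes "finite S" "\<And>i. i \<in> S \<Longrightarrow> finite (supp (v i))"
  shows "finite (supp (\<lambda>z. \<Sum>i\<in>S. c i * v i z))"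
  using supp_lin_sub[of c v S] assms finite_subset by blast

lemma finite_supp_sum:
  fixes v :: "'i \<Rightarrow> 'a \<Rightarrow> 'k::field"
  assumes "finite S" "\<And>i. i \<in> S \<Longrightarrow> finite (supp (v i))"
  shows "finite (supp (\<lambda>z. \<Sum>i\<in>S. v i z))"
  using finite_supp_lin[of S v "\<lambda>_. 1"] assms by simp

lemma lext_lin:
  fixes v :: "'i \<Rightarrow> 'a \<Rightarrow> 'k::field"
  assumes S: "finite S" and fv: "\<And>i. i \<in> S \<Longrightarrow> finite (supp (v i))"
  shows "lext M (\<lambda>z. \<Sum>i\<in>S. c i * v i z) y = (\<Sum>i\<in>S. c i * lext M (v i) y)"
proof -
  let ?T = "\<Union>i\<in>S. supp (v i)"
  have fT: "finite ?T" using S fv by blast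
  have "lext M (\<lambda>z. \<Sum>i\<in>S. c i * v i z) y = (\<Sum>x\<in>?T. (\<Sum>i\<in>S. c i * v i x) * M x y)"
    by (rule lext_sup[OF fT supp_lin_sub])
  also have "\<dots> = (\<Sum>x\<in>?T. \<Sum>i\<in>S. c i * (v i x * M x y))"
    by (simp add: sum_distrib_right mult.assoc)
  also have "\<dots> = (\<Sum>i\<in>S. \<Sum>x\<in>?T. c i * (v i x * M x y))"
    by (rule sum.swap)
  also have "\<dots> = (\<Sum>i\<in>S. c i * (\<Sum>x\<in>?T. v i x * M x y))"
    by (simp add: sum_distrib_left)
  also have "\<dots> = (\<Sum>i\<in>S. c i * lext M (v i) y)"
  proof (rule sum.cong[OF refl])
    fix i assume i: "i \<in> S"
    have "lext M (v i) y = (\<Sum>x\<in>?T. v i x * M x y)"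
      by (rule lext_sup[OF fT]) (use i in blast)
    then show "c i * (\<Sum>x\<in>?T. v i x * M x y) = c i * lext M (v i) y" by simp
  qed
  finally show ?thesis .
qed

lemma lext_sum:
  fixes v :: "'i \<Rightarrow> 'a \<Rightarrow> 'k::field"
  assumes "finite S" "\<And>i. i \<in> S \<Longrightarrow> finite (supp (v i))"
  shows "lext M (\<lambda>z. \<Sum>i\<in>S. v i z) y = (\<Sum>i\<in>S. lext M (v i) y)"
  using lext_lin[of S v M "\<lambda>_. 1" y] assms by simp

lemma finite_supp_lext:
  fixes w :: "'a \<Rightarrow> 'k::field"
  assumes "finite (supp w)" "\<And>x. finite (supp (M x))"
  shows "finite (supp (lext M w))"
proof -
  have "supp (lext M w) \<subseteq> (\<Union>x\<in>supp w. supp (M x))"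
  proof
    fix y assume "y \<in> supp (lext M w)"
    then have "(\<Sum>x\<in>supp w. w x * M x y) \<noteq> 0" by (simp add: supp_def lext_def)
    then obtain x where "x \<in> supp w" "w x * M x y \<noteq> 0" by (meson sum.neutral)
    then show "y \<in> (\<Union>x\<in>supp w. supp (M x))" by (auto simp: supp_def)
  qed
  then show ?thesis using assms finite_subset by blast
qed

lemma vec_expand:
  fixes u :: "'a \<Rightarrow> 'k::field"
  assumes "finite (supp u)"
  shows "u = (\<lambda>y. \<Sum>a\<in>supp u. u a * bvec a y)"
proof
  fix y
  have "(\<Sum>a\<in>supp u. u a * bvec a y) = (\<Sum>a\<in>supp u. if y = a then u a else 0)"
    by (rule sum.cong) (auto simp: bvec_def)
  also have "\<dots> = u y" using assms by (simp add: supp_def)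
  finally show "u y = (\<Sum>a\<in>supp u. u a * bvec a y)" by simp
qed

lemma tens_bvec: "tens (bvec a) (bvec b) = (bvec (a, b) :: _ \<Rightarrow> 'k::field)"
  by (auto simp: tens_def bvec_def)

lemma supp_tens: "supp (tens u v) \<subseteq> supp u \<times> supp v"
  by (auto simp: supp_def tens_def)

lemma finite_supp_tens: "finite (supp u) \<Longrightarrow> finite (supp v) \<Longrightarrow> finite (supp (tens u v))"
  using supp_tens finite_subset by (metis finite_SigmaI)

lemma tens_lin_left:
  fixes u :: "'i \<Rightarrow> 'a \<Rightarrow> 'k::field"
  shows "tens (\<lambda>z. \<Sum>i\<in>S. c i * u i z) v = (\<lambda>p. \<Sum>i\<in>S. c i * tens (u i) v p)"
  by (auto simp: tens_def sum_distrib_right mult.assoc)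

lemma tens_lin_right:
  fixes v :: "'i \<Rightarrow> 'a \<Rightarrow> 'k::field"
  shows "tens u (\<lambda>z. \<Sum>i\<in>S. c i * v i z) = (\<lambda>p. \<Sum>i\<in>S. c i * tens u (v i) p)"
  by (auto simp: tens_def sum_distrib_left mult.left_commute)

lemma tens_sum_left:
  fixes u :: "'i \<Rightarrow> 'a \<Rightarrow> 'k::field"
  shows "tens (\<lambda>z. \<Sum>i\<in>S. u i z) v = (\<lambda>p. \<Sum>i\<in>S. tens (u i) v p)"
  by (auto simp: tens_def sum_distrib_right)

lemma tens_sum_right:
  fixes v :: "'i \<Rightarrow> 'a \<Rightarrow> 'k::field"
  shows "tens u (\<lambda>z. \<Sum>i\<in>S. v i z) = (\<lambda>p. \<Sum>i\<in>S. tens u (v i) p)"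
  by (auto simp: tens_def sum_distrib_left)

definition ecat :: "endo \<Rightarrow> endo \<Rightarrow> endo" where
  "ecat a b = abs_endo (shcat (rep_endo a) (rep_endo b))"

abbreviation eunit :: endo where "eunit \<equiv> abs_endo []"

lemma endo_rep: "is_endo (rep_endo a)"
  using rep_endo by simp

lemma rep_abs: "is_endo L \<Longrightarrow> rep_endo (abs_endo L) = L"
  by (simp add: abs_endo_inverse)

lemma endo_Nil: "is_endo []" by (simp add: is_endo_def)

lemma rep_eunit: "rep_endo eunit = []" using rep_abs[OF endo_Nil] .

lemma abs_eq_iff: "is_endo L \<Longrightarrow> abs_endo L = g \<longleftrightarrow> L = rep_endo g"
  by (metis rep_abs rep_endo_inverse)

lemma rep_ecat: "rep_endo (ecat a b) = shcat (rep_endo a) (rep_endo b)"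
  unfolding ecat_def by (rule rep_abs[OF endo_shcat[OF endo_rep endo_rep]])

lemma ecat_assoc: "ecat (ecat a b) c = ecat a (ecat b c)"
  unfolding ecat_def by (simp add: rep_ecat[unfolded ecat_def] shcat_assoc)

lemma ecat_eunit_left[simp]: "ecat eunit a = a"
  unfolding ecat_def by (simp add: rep_eunit rep_endo_inverse)

lemma ecat_eunit_right[simp]: "ecat a eunit = a"
  unfolding ecat_def by (simp add: rep_eunit rep_endo_inverse)

lemma ecat_abs: "is_endo f \<Longrightarrow> is_endo g \<Longrightarrow> ecat (abs_endo f) (abs_endo g) = abs_endo (shcat f g)"
  by (simp add: ecat_def rep_abs)

lemma efmu_eq: "efmu p = bvec (ecat (fst p) (snd p))"
  by (simp add: efmu_def ecat_def case_prod_beta)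

lemma efmu_pair: "efmu (a, b) = bvec (ecat a b)"
  by (simp add: efmu_eq)

lemma finite_supp_efmu: "finite (supp (efmu p :: endo \<Rightarrow> 'k::field))"
  by (simp add: efmu_eq supp_bvec)

definition vprod :: "(endo \<Rightarrow> 'k::field) \<Rightarrow> (endo \<Rightarrow> 'k) \<Rightarrow> endo \<Rightarrow> 'k" where
  "vprod u v = lext efmu (tens u v)"

lemma finite_supp_vprod:
  "finite (supp u) \<Longrightarrow> finite (supp v) \<Longrightarrow> finite (supp (vprod u v))"
  unfolding vprod_def by (rule finite_supp_lext[OF finite_supp_tens finite_supp_efmu])

lemma vprod_bvec: "vprod (bvec a) (bvec b) = (bvec (ecat a b) :: endo \<Rightarrow> 'k::field)"
  by (simp add: vprod_def tens_bvec lext_bvec efmu_pair)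

lemma vprod_lin_left:
  fixes u :: "'i \<Rightarrow> endo \<Rightarrow> 'k::field"
  assumes "finite S" "\<And>i. i \<in> S \<Longrightarrow> finite (supp (u i))" "finite (supp v)"
  shows "vprod (\<lambda>z. \<Sum>i\<in>S. c i * u i z) v y = (\<Sum>i\<in>S. c i * vprod (u i) v y)"
  unfolding vprod_def tens_lin_left
  by (rule lext_lin) (use assms finite_supp_tens in auto)

lemma vprod_lin_right:
  fixes v :: "'i \<Rightarrow> endo \<Rightarrow> 'k::field"
  assumes "finite S" "\<And>i. i \<in> S \<Longrightarrow> finite (supp (v i))" "finite (supp u)"
  shows "vprod u (\<lambda>z. \<Sum>i\<in>S. c i * v i z) y = (\<Sum>i\<in>S. c i * vprod u (v i) y)"
  unfolding vprod_def tens_lin_right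
  by (rule lext_lin) (use assms finite_supp_tens in auto)

lemma vprod_sum_left:
  fixes u :: "'i \<Rightarrow> endo \<Rightarrow> 'k::field"
  assumes "finite S" "\<And>i. i \<in> S \<Longrightarrow> finite (supp (u i))" "finite (supp v)"
  shows "vprod (\<lambda>z. \<Sum>i\<in>S. u i z) v y = (\<Sum>i\<in>S. vprod (u i) v y)"
  using vprod_lin_left[of S u v "\<lambda>_. 1" y] assms by simp

lemma vprod_sum_right:
  fixes v :: "'i \<Rightarrow> endo \<Rightarrow> 'k::field"
  assumes "finite S" "\<And>i. i \<in> S \<Longrightarrow> finite (supp (v i))" "finite (supp u)"
  shows "vprod u (\<lambda>z. \<Sum>i\<in>S. v i z) y = (\<Sum>i\<in>S. vprod u (v i) y)"
  using vprod_lin_right[of S v u "\<lambda>_. 1" y] assms by simp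

lemma finite_supp_bvec: "finite (supp (bvec x :: _ \<Rightarrow> 'k::field))"
  by (simp add: supp_bvec)

lemma vprod_bvec_left:
  fixes v :: "endo \<Rightarrow> 'k::field"
  assumes "finite (supp v)"
  shows "vprod (bvec a) v y = (\<Sum>b\<in>supp v. v b * bvec (ecat a b) y)"
proof -
  have "vprod (bvec a) v y = vprod (bvec a) (\<lambda>z. \<Sum>b\<in>supp v. v b * bvec b z) y"
    using vec_expand[OF assms] by metis
  also have "\<dots> = (\<Sum>b\<in>supp v. v b * vprod (bvec a) (bvec b) y)"
    by (rule vprod_lin_right) (use assms finite_supp_bvec in auto)
  finally show ?thesis by (simp add: vprod_bvec)
qed

lemma vprod_expand_left:
  fixes u v :: "endo \<Rightarrow> 'k::field"
  assumes "finite (supp u)" "finite (supp v)"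
  shows "vprod u v y = (\<Sum>a\<in>supp u. u a * vprod (bvec a) v y)"
proof -
  have "vprod u v y = vprod (\<lambda>z. \<Sum>a\<in>supp u. u a * bvec a z) v y"
    using vec_expand[OF assms(1)] by metis
  also have "\<dots> = (\<Sum>a\<in>supp u. u a * vprod (bvec a) v y)"
    by (rule vprod_lin_left) (use assms finite_supp_bvec in auto)
  finally show ?thesis .
qed

lemma vprod_expand_left_fun:
  fixes u v :: "endo \<Rightarrow> 'k::field"
  assumes "finite (supp u)" "finite (supp v)"
  shows "vprod u v = (\<lambda>y. \<Sum>a\<in>supp u. u a * vprod (bvec a) v y)"
  using vprod_expand_left[OF assms] by blast

lemma vprod_assoc:
  fixes u v w :: "endo \<Rightarrow> 'k::field"
  assumes fu: "finite (supp u)" and fv: "finite (supp v)" and fw: "finite (supp w)"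
  shows "vprod (vprod u v) w = vprod u (vprod v w)"
proof
  fix y
  have fb: "\<And>a. finite (supp (bvec a :: endo \<Rightarrow> 'k))" by (rule finite_supp_bvec)
  have "vprod (vprod u v) w y = vprod (\<lambda>z. \<Sum>a\<in>supp u. u a * vprod (bvec a) v z) w y"
    by (simp only: vprod_expand_left_fun[OF fu fv])
  also have "\<dots> = (\<Sum>a\<in>supp u. u a * vprod (vprod (bvec a) v) w y)"
    by (rule vprod_lin_left) (use fu fv fw finite_supp_vprod fb in auto)
  also have "\<dots> = (\<Sum>a\<in>supp u. u a * (\<Sum>b\<in>supp v. v b * (\<Sum>d\<in>supp w. w d * bvec (ecat (ecat a b) d) y)))"
  proof (rule sum.cong[OF refl])
    fix a
    have "vprod (bvec a) v = (\<lambda>z. \<Sum>b\<in>supp v. v b * bvec (ecat a b) z)"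
      using vprod_bvec_left[OF fv] by blast
    then have "vprod (vprod (bvec a) v) w y = vprod (\<lambda>z. \<Sum>b\<in>supp v. v b * bvec (ecat a b) z) w y"
      by simp
    also have "\<dots> = (\<Sum>b\<in>supp v. v b * vprod (bvec (ecat a b)) w y)"
      by (rule vprod_lin_left) (use fv fw fb in auto)
    also have "\<dots> = (\<Sum>b\<in>supp v. v b * (\<Sum>d\<in>supp w. w d * bvec (ecat (ecat a b) d) y))"
      using vprod_bvec_left[OF fw] by simp
    finally show "u a * vprod (vprod (bvec a) v) w y =
      u a * (\<Sum>b\<in>supp v. v b * (\<Sum>d\<in>supp w. w d * bvec (ecat (ecat a b) d) y))" by simp
  qed
  also have "\<dots> = (\<Sum>a\<in>supp u. u a * vprod (bvec a) (vprod v w) y)"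
  proof (rule sum.cong[OF refl])
    fix a
    have "vprod v w = (\<lambda>z. \<Sum>b\<in>supp v. v b * vprod (bvec b) w z)"
      using vprod_expand_left_fun[OF fv fw] .
    then have "vprod (bvec a) (vprod v w) y = vprod (bvec a) (\<lambda>z. \<Sum>b\<in>supp v. v b * vprod (bvec b) w z) y"
      by simp
    also have "\<dots> = (\<Sum>b\<in>supp v. v b * vprod (bvec a) (vprod (bvec b) w) y)"
      by (rule vprod_lin_right) (use fv fw fb finite_supp_vprod in auto)
    also have "\<dots> = (\<Sum>b\<in>supp v. v b * (\<Sum>d\<in>supp w. w d * bvec (ecat (ecat a b) d) y))"
    proof (rule sum.cong[OF refl])
      fix b
      have "vprod (bvec b) w = (\<lambda>z. \<Sum>d\<in>supp w. w d * bvec (ecat b d) z)"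
        using vprod_bvec_left[OF fw] by blast
      then have "vprod (bvec a) (vprod (bvec b) w) y = vprod (bvec a) (\<lambda>z. \<Sum>d\<in>supp w. w d * bvec (ecat b d) z) y"
        by simp
      also have "\<dots> = (\<Sum>d\<in>supp w. w d * vprod (bvec a) (bvec (ecat b d)) y)"
        by (rule vprod_lin_right) (use fw fb in auto)
      also have "\<dots> = (\<Sum>d\<in>supp w. w d * bvec (ecat (ecat a b) d) y)"
        by (simp add: vprod_bvec ecat_assoc)
      finally show "v b * vprod (bvec a) (vprod (bvec b) w) y = v b * (\<Sum>d\<in>supp w. w d * bvec (ecat (ecat a b) d) y)"
        by simp
    qed
    finally show "u a * (\<Sum>b\<in>supp v. v b * (\<Sum>d\<in>supp w. w d * bvec (ecat (ecat a b) d) y)) =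
      u a * vprod (bvec a) (vprod v w) y" by simp
  qed
  also have "\<dots> = vprod u (vprod v w) y"
    using vprod_expand_left[OF fu finite_supp_vprod[OF fv fw]] by simp
  finally show "vprod (vprod u v) w y = vprod u (vprod v w) y" .
qed

lemma vprod_one_right:
  fixes u :: "endo \<Rightarrow> 'k::field"
  assumes "finite (supp u)"
  shows "vprod u efone = u"
proof
  fix y
  have "vprod u efone y = (\<Sum>a\<in>supp u. u a * vprod (bvec a) (bvec eunit) y)"
    unfolding efone_def by (rule vprod_expand_left[OF assms finite_supp_bvec])
  also have "\<dots> = (\<Sum>a\<in>supp u. u a * bvec a y)" by (simp add: vprod_bvec)
  also have "\<dots> = u y" using vec_expand[OF assms] by metis
  finally show "vprod u efone y = u y" .
qed

lemma vprod_one_left: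
  fixes u :: "endo \<Rightarrow> 'k::field"
  assumes "finite (supp u)"
  shows "vprod efone u = u"
proof
  fix y
  have "vprod efone u y = (\<Sum>b\<in>supp u. u b * bvec (ecat eunit b) y)"
    unfolding efone_def by (rule vprod_bvec_left[OF assms])
  also have "\<dots> = u y" using vec_expand[OF assms] by simp metis
  finally show "vprod efone u y = u y" .
qed

text \<open>The coproduct of the basis vector f is the sum over ideals I of f of
  lpart f I \<otimes> rpart f I; it agrees with efDelta, which counts the ideals giving each pair.\<close>
definition coprod :: "nat list \<Rightarrow> endo \<times> endo \<Rightarrow> 'k::field" where
  "coprod f = (\<lambda>p. \<Sum>I\<in>ideals f. bvec (abs_endo (lpart f I), abs_endo (rpart f I)) p)"

lemma efDelta_eq: "(efDelta x :: _ \<Rightarrow> 'k::field) = coprod (rep_endo x)"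
proof
  fix p :: "endo \<times> endo"
  obtain g h where p: "p = (g, h)" by (cases p)
  let ?f = "rep_endo x"
  have "(coprod ?f p :: 'k) = (\<Sum>I\<in>ideals ?f. of_bool ((g, h) = (abs_endo (lpart ?f I), abs_endo (rpart ?f I))))"
    unfolding coprod_def p by (simp add: bvec_of_bool)
  also have "\<dots> = of_nat (card (ideals ?f \<inter> {I. (g, h) = (abs_endo (lpart ?f I), abs_endo (rpart ?f I))}))"
    using finite_ideals by simp
  also have "ideals ?f \<inter> {I. (g, h) = (abs_endo (lpart ?f I), abs_endo (rpart ?f I))} =
      {I. is_ideal ?f I \<and> lpart ?f I = rep_endo g \<and> rpart ?f I = rep_endo h}"
  proof -
    have "((g, h) = (abs_endo (lpart ?f I), abs_endo (rpart ?f I))) = (lpart ?f I = rep_endo g \<and> rpart ?f I = rep_endo h)"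
      if I: "is_ideal ?f I" for I
    proof -
      have e1: "abs_endo (lpart ?f I) = g \<longleftrightarrow> lpart ?f I = rep_endo g" by (rule abs_eq_iff) (simp add: endo_stdr)
      have e2: "abs_endo (rpart ?f I) = h \<longleftrightarrow> rpart ?f I = rep_endo h"
        by (rule abs_eq_iff) (simp add: endo_stdr finite_ideal[OF I])
      show ?thesis using e1 e2 by auto
    qed
    then show ?thesis by auto
  qed
  finally show "(efDelta x p :: 'k) = coprod ?f p" unfolding efDelta_def p by simp
qed

lemma finite_supp_coprod: "finite (supp (coprod f :: _ \<Rightarrow> 'k::field))"
  unfolding coprod_def by (rule finite_supp_sum[OF finite_ideals finite_supp_bvec])

lemma endo_lpart: "is_endo (lpart f I)" by (simp add: endo_stdr)
lemma endo_rpart: "is_ideal f I \<Longrightarrow> is_endo (rpart f I)" by (simp add: endo_stdr finite_ideal)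

lemma lext_coprod:
  "lext M (coprod f :: _ \<Rightarrow> 'k::field) y = (\<Sum>I\<in>ideals f. M (abs_endo (lpart f I), abs_endo (rpart f I)) y)"
  unfolding coprod_def by (simp add: lext_sum[OF finite_ideals finite_supp_bvec] lext_bvec)

lemma bvec_pair: "(bvec (u, v) (a, b) :: 'k::field) = bvec u a * bvec v b"
  by (simp add: bvec_def)

lemma efone_apply: "(efone x :: 'k::field) = of_bool (x = eunit)"
  by (simp add: efone_def bvec_def)

lemma rep_eq_Nil: "rep_endo x = [] \<longleftrightarrow> x = eunit"
  by (metis rep_eunit rep_endo_inverse)

lemma coprod_rep_abs: "is_endo L \<Longrightarrow> efDelta (abs_endo L) = coprod L"
  by (simp add: efDelta_eq rep_abs)

lemma abs_endo_eq_eunit: "is_endo L \<Longrightarrow> abs_endo L = eunit \<longleftrightarrow> L = []"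
  using abs_eq_iff rep_eunit by metis

lemma ideals_Nil: "ideals [] = {{}}"
  by (auto simp: is_ideal_def)

lemma sum_ideal_delta:
  fixes g :: "nat set \<Rightarrow> 'k::field"
  assumes "is_ideal f I0"
  shows "(\<Sum>I\<in>ideals f. of_bool (I = I0) * g I) = g I0"
proof -
  have "(\<Sum>I\<in>ideals f. of_bool (I = I0) * g I) = (\<Sum>I\<in>ideals f \<inter> {I. I = I0}. g I)"
    by (rule sum_of_bool_mult_eq[OF finite_ideals])
  also have "ideals f \<inter> {I. I = I0} = {I0}" using assms by auto
  finally show ?thesis by simp
qed

lemma ax_assoc: "lext efmu (tens (efmu (x, y)) (bvec z)) = (lext efmu (tens (bvec x) (efmu (y, z))) :: endo \<Rightarrow> 'k::field)"
  by (simp add: efmu_pair tens_bvec lext_bvec ecat_assoc)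

lemma ax_unit: "lext efmu (tens efone (bvec x)) = (bvec x :: endo \<Rightarrow> 'k::field) \<and>
    lext efmu (tens (bvec x) efone) = (bvec x :: endo \<Rightarrow> 'k)"
  by (simp add: efone_def efmu_pair tens_bvec lext_bvec)

lemma Delta_id_Delta:
  fixes x :: endo
  defines "f \<equiv> rep_endo x"
  shows "lext (tmat efDelta bvec) (efDelta x) ((a, b), c) =
    (\<Sum>I\<in>ideals f. \<Sum>J\<in>ideals (lpart f I). bvec (abs_endo (lpart (lpart f I) J)) a *
       bvec (abs_endo (rpart (lpart f I) J)) b * (bvec (abs_endo (rpart f I)) c :: 'k::field))"
proof -
  have "lext (tmat efDelta bvec) (efDelta x) ((a, b), c) =
      (\<Sum>I\<in>ideals f. tmat efDelta bvec (abs_endo (lpart f I), abs_endo (rpart f I)) ((a, b), c))"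
    by (simp add: efDelta_eq lext_coprod f_def)
  also have "\<dots> = (\<Sum>I\<in>ideals f. coprod (lpart f I) (a, b) * bvec (abs_endo (rpart f I)) c)"
    by (simp add: tmat_def tens_def coprod_rep_abs endo_stdr)
  finally show ?thesis by (simp add: coprod_def bvec_pair sum_distrib_right)
qed

lemma id_Delta_Delta:
  fixes x :: endo
  defines "f \<equiv> rep_endo x"
  shows "lext (tmat bvec efDelta) (efDelta x) (a, (b, c)) =
    (\<Sum>I\<in>ideals f. \<Sum>J\<in>ideals (rpart f I). bvec (abs_endo (lpart f I)) a *
       bvec (abs_endo (lpart (rpart f I) J)) b * (bvec (abs_endo (rpart (rpart f I) J)) c :: 'k::field))"
proof -
  have "lext (tmat bvec efDelta) (efDelta x) (a, (b, c)) =
      (\<Sum>I\<in>ideals f. tmat bvec efDelta (abs_endo (lpart f I), abs_endo (rpart f I)) (a, (b, c)))"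
    by (simp add: efDelta_eq lext_coprod f_def)
  also have "\<dots> = (\<Sum>I\<in>ideals f. bvec (abs_endo (lpart f I)) a * coprod (rpart f I) (b, c))"
    by (rule sum.cong[OF refl]) (simp add: tmat_def tens_def coprod_rep_abs endo_rpart)
  finally show ?thesis by (simp add: coprod_def bvec_pair sum_distrib_left mult.assoc)
qed

text \<open>Coassociativity is the coassociativity of the splitting (coassoc_sum).\<close>
lemma ax_coassoc:
  "lext (tmat efDelta bvec) (efDelta x) =
     (\<lambda>((a, b), c). lext (tmat bvec efDelta) (efDelta x) (a, (b, c)) :: 'k::field)"
proof (rule ext, clarify)
  fix a b c
  show "lext (tmat efDelta bvec) (efDelta x) ((a, b), c) =
      (lext (tmat bvec efDelta) (efDelta x) (a, (b, c)) :: 'k)"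
    unfolding Delta_id_Delta id_Delta_Delta
    by (rule coassoc_sum[of "\<lambda>p q r. bvec (abs_endo p) a * bvec (abs_endo q) b * bvec (abs_endo r) c"])
qed

text \<open>The counit is the coefficient of the empty function; only the extreme ideals
  contribute.\<close>
lemma ax_counit:
  "lext (\<lambda>(a, b). (\<lambda>y. efone a * bvec b y)) (efDelta x) = (bvec x :: endo \<Rightarrow> 'k::field) \<and>
   lext (\<lambda>(a, b). (\<lambda>y. bvec a y * efone b)) (efDelta x) = (bvec x :: endo \<Rightarrow> 'k)"
proof (intro conjI ext)
  fix y
  let ?f = "rep_endo x"
  have ef: "is_endo ?f" by (rule endo_rep)
  have "lext (\<lambda>(a, b). (\<lambda>y. efone a * bvec b y)) (efDelta x) y =
      (\<Sum>I\<in>ideals ?f. efone (abs_endo (lpart ?f I)) * bvec (abs_endo (rpart ?f I)) y :: 'k)"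
    by (simp add: efDelta_eq lext_coprod)
  also have "\<dots> = (\<Sum>I\<in>ideals ?f. of_bool (I = dom_endo ?f) * bvec (abs_endo (rpart ?f I)) y)"
  proof (rule sum.cong[OF refl])
    fix I assume I: "I \<in> ideals ?f"
    have "efone (abs_endo (lpart ?f I)) = (of_bool (I = dom_endo ?f) :: 'k)"
      using abs_endo_eq_eunit[OF endo_lpart] lpart_Nil_iff I by (simp add: efone_apply)
    then show "efone (abs_endo (lpart ?f I)) * bvec (abs_endo (rpart ?f I)) y = of_bool (I = dom_endo ?f) * (bvec (abs_endo (rpart ?f I)) y :: 'k)"
      by simp
  qed
  also have "\<dots> = bvec (abs_endo (rpart ?f (dom_endo ?f))) y" by (rule sum_ideal_delta[OF ideal_full])
  also have "\<dots> = bvec x y" using rpart_full[OF ef] by (simp add: rep_endo_inverse)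
  finally show "lext (\<lambda>(a, b). (\<lambda>y. efone a * bvec b y)) (efDelta x) y = (bvec x y :: 'k)" .
next
  fix y
  let ?f = "rep_endo x"
  have ef: "is_endo ?f" by (rule endo_rep)
  have "lext (\<lambda>(a, b). (\<lambda>y. bvec a y * efone b)) (efDelta x) y =
      (\<Sum>I\<in>ideals ?f. bvec (abs_endo (lpart ?f I)) y * efone (abs_endo (rpart ?f I)) :: 'k)"
    by (simp add: efDelta_eq lext_coprod)
  also have "\<dots> = (\<Sum>I\<in>ideals ?f. of_bool (I = {}) * bvec (abs_endo (lpart ?f I)) y)"
  proof (rule sum.cong[OF refl])
    fix I assume I: "I \<in> ideals ?f"
    have "efone (abs_endo (rpart ?f I)) = (of_bool (I = {}) :: 'k)"
      using abs_endo_eq_eunit[OF endo_rpart] rpart_Nil_iff I by (simp add: efone_apply)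
    then show "bvec (abs_endo (lpart ?f I)) y * efone (abs_endo (rpart ?f I)) = of_bool (I = {}) * (bvec (abs_endo (lpart ?f I)) y :: 'k)"
      by simp
  qed
  also have "\<dots> = bvec (abs_endo (lpart ?f {})) y" by (rule sum_ideal_delta[OF ideal_empty])
  also have "\<dots> = bvec x y" using lpart_empty[OF ef] by (simp add: rep_endo_inverse)
  finally show "lext (\<lambda>(a, b). (\<lambda>y. bvec a y * efone b)) (efDelta x) y = (bvec x y :: 'k)" .
qed

text \<open>The coproduct is multiplicative: ideals of f \<bullet> g split as pairs (mult_sum).\<close>
lemma ax_mult:
  "lext efDelta (efmu (x, y)) =
   (lext (\<lambda>((a1, a2), (b1, b2)). tens (efmu (a1, b1)) (efmu (a2, b2))) (tens (efDelta x) (efDelta y))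
     :: endo \<times> endo \<Rightarrow> 'k::field)"
proof
  fix z :: "endo \<times> endo"
  let ?f = "rep_endo x" and ?g = "rep_endo y"
  have ef: "is_endo ?f" and eg: "is_endo ?g" by (rule endo_rep)+
  define M where "M = (\<lambda>((a1, a2), (b1, b2)). tens (efmu (a1, b1)) (efmu (a2, b2)) :: endo \<times> endo \<Rightarrow> 'k)"
  define G where "G p q = (bvec (abs_endo p, abs_endo q) z :: 'k)" for p q
  have "lext efDelta (efmu (x, y)) z = (coprod (shcat ?f ?g) z :: 'k)"
    by (simp add: efmu_pair lext_bvec efDelta_eq rep_ecat)
  also have "\<dots> = (\<Sum>K\<in>ideals (shcat ?f ?g). G (lpart (shcat ?f ?g) K) (rpart (shcat ?f ?g) K))"
    by (simp add: coprod_def G_def)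
  also have "\<dots> = (\<Sum>I\<in>ideals ?f. \<Sum>J\<in>ideals ?g. G (shcat (lpart ?f I) (lpart ?g J)) (shcat (rpart ?f I) (rpart ?g J)))"
    by (rule mult_sum[OF ef eg])
  also have "\<dots> = lext M (tens (efDelta x) (efDelta y)) z"
  proof -
    have t: "tens (efDelta x) (efDelta y) = (\<lambda>p. \<Sum>I\<in>ideals ?f. \<Sum>J\<in>ideals ?g.
       (bvec ((abs_endo (lpart ?f I), abs_endo (rpart ?f I)), (abs_endo (lpart ?g J), abs_endo (rpart ?g J))) p :: 'k))"
      by (simp add: efDelta_eq coprod_def tens_sum_left tens_sum_right tens_bvec)
    have fin: "\<And>I. finite (supp (\<lambda>p. \<Sum>J\<in>ideals ?g.
       (bvec ((abs_endo (lpart ?f I), abs_endo (rpart ?f I)), (abs_endo (lpart ?g J), abs_endo (rpart ?g J))) p :: 'k)))"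
      by (rule finite_supp_sum[OF finite_ideals finite_supp_bvec])
    have "lext M (tens (efDelta x) (efDelta y)) z = (\<Sum>I\<in>ideals ?f. \<Sum>J\<in>ideals ?g.
       M ((abs_endo (lpart ?f I), abs_endo (rpart ?f I)), (abs_endo (lpart ?g J), abs_endo (rpart ?g J))) z)"
      unfolding t
    proof -
      have "lext M (\<lambda>p. \<Sum>I\<in>ideals ?f. \<Sum>J\<in>ideals ?g.
       (bvec ((abs_endo (lpart ?f I), abs_endo (rpart ?f I)), (abs_endo (lpart ?g J), abs_endo (rpart ?g J))) p :: 'k)) z
       = (\<Sum>I\<in>ideals ?f. lext M (\<lambda>p. \<Sum>J\<in>ideals ?g.
       (bvec ((abs_endo (lpart ?f I), abs_endo (rpart ?f I)), (abs_endo (lpart ?g J), abs_endo (rpart ?g J))) p :: 'k)) z)"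
        by (rule lext_sum[OF finite_ideals fin])
      also have "\<dots> = (\<Sum>I\<in>ideals ?f. \<Sum>J\<in>ideals ?g. lext M
       (bvec ((abs_endo (lpart ?f I), abs_endo (rpart ?f I)), (abs_endo (lpart ?g J), abs_endo (rpart ?g J))) :: _ \<Rightarrow> 'k) z)"
        by (rule sum.cong[OF refl], rule lext_sum[OF finite_ideals finite_supp_bvec])
      finally show "lext M (\<lambda>p. \<Sum>I\<in>ideals ?f. \<Sum>J\<in>ideals ?g.
       (bvec ((abs_endo (lpart ?f I), abs_endo (rpart ?f I)), (abs_endo (lpart ?g J), abs_endo (rpart ?g J))) p :: 'k)) z = (\<Sum>I\<in>ideals ?f. \<Sum>J\<in>ideals ?g.
       M ((abs_endo (lpart ?f I), abs_endo (rpart ?f I)), (abs_endo (lpart ?g J), abs_endo (rpart ?g J))) z)" by (simp only: lext_bvec)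
    qed
    also have "\<dots> = (\<Sum>I\<in>ideals ?f. \<Sum>J\<in>ideals ?g. G (shcat (lpart ?f I) (lpart ?g J)) (shcat (rpart ?f I) (rpart ?g J)))"
    proof (intro sum.cong refl)
      fix I J assume I: "I \<in> ideals ?f" and J: "J \<in> ideals ?g"
      show "M ((abs_endo (lpart ?f I), abs_endo (rpart ?f I)), (abs_endo (lpart ?g J), abs_endo (rpart ?g J))) z =
          G (shcat (lpart ?f I) (lpart ?g J)) (shcat (rpart ?f I) (rpart ?g J))"
        using I J by (simp add: M_def G_def efmu_pair tens_bvec ecat_abs endo_stdr endo_rpart)
    qed
    finally show ?thesis by simp
  qed
  finally show "lext efDelta (efmu (x, y)) z = lext M (tens (efDelta x) (efDelta y)) z" .
qed

lemma ax_Delta_one: "lext efDelta efone = (tens efone efone :: endo \<times> endo \<Rightarrow> 'k::field)"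
proof -
  have "lext efDelta efone = (coprod [] :: endo \<times> endo \<Rightarrow> 'k)"
    by (simp add: efone_def lext_bvec coprod_rep_abs endo_Nil)
  also have "\<dots> = bvec (eunit, eunit)"
    by (simp add: coprod_def ideals_Nil stdr_empty)
  also have "\<dots> = tens efone efone" by (simp add: efone_def tens_bvec)
  finally show ?thesis .
qed

lemma ecat_eq_eunit: "ecat x y = eunit \<longleftrightarrow> x = eunit \<and> y = eunit"
  by (metis rep_eq_Nil rep_ecat shcat_eq_Nil)

lemma ax_eps_mult: "lfun efone (efmu (x, y)) = (efone x * efone y :: 'k::field)"
  by (simp add: efmu_pair lfun_bvec efone_apply ecat_eq_eunit)

lemma ax_eps_one: "lfun efone efone = (1 :: 'k::field)"
  by (simp only: efone_def lfun_bvec) (simp add: bvec_def)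

lemma efdeg_ecat: "efdeg (ecat x y) = efdeg x + efdeg y"
  by (simp add: efdeg_def rep_ecat)

lemma graded: "graded_sc efdeg efmu (efone :: endo \<Rightarrow> 'k::field) efDelta efone"
  unfolding graded_sc_def
proof (intro conjI allI impI)
  fix x y
  show "supp (efmu (x, y) :: endo \<Rightarrow> 'k) \<subseteq> {z. efdeg z = efdeg x + efdeg y}"
    by (simp add: efmu_pair supp_bvec efdeg_ecat)
next
  show "supp (efone :: endo \<Rightarrow> 'k) \<subseteq> {z. efdeg z = 0}"
    by (simp add: efone_def supp_bvec efdeg_def rep_eunit)
next
  fix x
  show "supp (efDelta x :: endo \<times> endo \<Rightarrow> 'k) \<subseteq> {(a, b). efdeg a + efdeg b = efdeg x}"
  proof
    fix p assume p: "p \<in> supp (efDelta x :: endo \<times> endo \<Rightarrow> 'k)"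
    obtain a b where ab: "p = (a, b)" by (cases p)
    let ?f = "rep_endo x"
    let ?S = "{I. is_ideal ?f I \<and> stdr ?f (dom_endo ?f - I) = rep_endo a \<and> stdr ?f I = rep_endo b}"
    have "(of_nat (card ?S) :: 'k) \<noteq> 0" using p ab by (simp add: supp_def efDelta_def)
    then have "card ?S \<noteq> 0" by (metis of_nat_0)
    then have "?S \<noteq> {}" by (metis card.empty)
    then obtain I where "I \<in> ?S" by blast
    then have I: "is_ideal ?f I" "lpart ?f I = rep_endo a" "rpart ?f I = rep_endo b" by auto
    have "card I \<le> length ?f"
      using ideal_sub[OF I(1)] by (metis card_atLeastAtMost card_mono diff_Suc_1 finite_atLeastAtMost)
    then have "efdeg a + efdeg b = efdeg x"
      using length_lpart[OF I(1)] length_rpart[OF I(1)] I by (simp add: efdeg_def)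
    then show "p \<in> {(a, b). efdeg a + efdeg b = efdeg x}" using ab by simp
  qed
next
  fix x assume "(efone x :: 'k) \<noteq> 0"
  then have "x = eunit" by (simp add: efone_apply)
  then show "efdeg x = 0" by (simp add: efdeg_def rep_eunit)
qed

text \<open>The antipode is defined by the recursion S(f) = - \<Sum>_{I \<noteq> \<emptyset>} S(lpart f I) \<cdot> rpart f I
  (and its mirror image on the right), as in any connected graded bialgebra; the recursion
  descends because proper ideals give strictly shorter parts.\<close>
lemma card_lpart_less: "is_ideal f I \<Longrightarrow> I \<noteq> {} \<Longrightarrow> length (lpart f I) < length f"
proof -
  assume I: "is_ideal f I" "I \<noteq> {}"
  have "card I > 0" using I finite_ideal by (simp add: card_gt_0_iff)
  moreover have "card I \<le> length f"
    using ideal_sub[OF I(1)] by (metis card_atLeastAtMost card_mono diff_Suc_1 finite_atLeastAtMost)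
  ultimately show ?thesis using length_lpart[OF I(1)] by simp
qed

lemma card_rpart_less: "is_ideal f I \<Longrightarrow> I \<noteq> dom_endo f \<Longrightarrow> length (rpart f I) < length f"
proof -
  assume I: "is_ideal f I" "I \<noteq> dom_endo f"
  have "I \<subset> dom_endo f" using ideal_sub[OF I(1)] I(2) by auto
  then have "card I < card (dom_endo f)" by (rule psubset_card_mono[OF finite_atLeastAtMost])
  moreover have "card (dom_endo f) = length f" by simp
  ultimately show ?thesis using length_rpart[OF I(1)] by simp
qed

text \<open>The same facts in the form produced by the termination goals.\<close>
lemma card_lpart_less': "is_ideal f I \<Longrightarrow> I \<noteq> {} \<Longrightarrow> length (stdr f ({Suc 0..length f} - I)) < length f"
  using card_lpart_less by (metis One_nat_def)

lemma card_rpart_less': "is_ideal f I \<Longrightarrow> I \<noteq> {Suc 0..length f} \<Longrightarrow> length (rpart f I) < length f"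
  using card_rpart_less by (metis One_nat_def)

function antipode_l :: "nat list \<Rightarrow> endo \<Rightarrow> 'k::field" where
  "antipode_l f = (if f = [] then efone else
     (\<lambda>y. - (\<Sum>I\<in>{I. is_ideal f I \<and> I \<noteq> {}}. vprod (antipode_l (lpart f I)) (bvec (abs_endo (rpart f I))) y)))"
  by pat_completeness auto
termination
  by (relation "measure length") (auto simp: card_lpart_less card_lpart_less')

function antipode_r :: "nat list \<Rightarrow> endo \<Rightarrow> 'k::field" where
  "antipode_r f = (if f = [] then efone else
     (\<lambda>y. - (\<Sum>I\<in>{I. is_ideal f I \<and> I \<noteq> dom_endo f}. vprod (bvec (abs_endo (lpart f I))) (antipode_r (rpart f I)) y)))"
  by pat_completeness auto
termination
  by (relation "measure length") (auto simp: card_rpart_less card_rpart_less')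

declare antipode_l.simps[simp del] antipode_r.simps[simp del]

lemma finite_supp_neg: "finite (supp g) \<Longrightarrow> finite (supp (\<lambda>y. - g y :: 'k::field))"
  by (simp add: supp_def)

lemma finite_ideals_sub: "finite {I. is_ideal f I \<and> P I}"
  using finite_ideals by (rule finite_subset[rotated]) auto

lemma finite_supp_antipode_l: "finite (supp (antipode_l f :: endo \<Rightarrow> 'k::field))"
proof (induction f rule: antipode_l.induct)
  case (1 f)
  show ?case
  proof (cases "f = []")
    case True then show ?thesis by (simp add: antipode_l.simps efone_def finite_supp_bvec)
  next
    case False
    have "finite (supp (\<lambda>y. \<Sum>I\<in>{I. is_ideal f I \<and> I \<noteq> {}}. vprod (antipode_l (lpart f I) :: endo \<Rightarrow> 'k) (bvec (abs_endo (rpart f I))) y))"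
    proof (rule finite_supp_sum[OF finite_ideals_sub])
      fix I assume I: "I \<in> {I. is_ideal f I \<and> I \<noteq> {}}"
      show "finite (supp (vprod (antipode_l (lpart f I) :: endo \<Rightarrow> 'k) (bvec (abs_endo (rpart f I)))))"
        using finite_supp_vprod[OF "1"[OF False I] finite_supp_bvec] .
    qed
    then show ?thesis using False by (subst antipode_l.simps) (simp add: finite_supp_neg)
  qed
qed

lemma finite_supp_antipode_r: "finite (supp (antipode_r f :: endo \<Rightarrow> 'k::field))"
proof (induction f rule: antipode_r.induct)
  case (1 f)
  show ?case
  proof (cases "f = []")
    case True then show ?thesis by (simp add: antipode_r.simps efone_def finite_supp_bvec)
  next
    case False
    have "finite (supp (\<lambda>y. \<Sum>I\<in>{I. is_ideal f I \<and> I \<noteq> dom_endo f}. vprod (bvec (abs_endo (lpart f I))) (antipode_r (rpart f I) :: endo \<Rightarrow> 'k) y))"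
    proof (rule finite_supp_sum[OF finite_ideals_sub])
      fix I assume I: "I \<in> {I. is_ideal f I \<and> I \<noteq> dom_endo f}"
      show "finite (supp (vprod (bvec (abs_endo (lpart f I))) (antipode_r (rpart f I) :: endo \<Rightarrow> 'k)))"
        using finite_supp_vprod[OF finite_supp_bvec "1"[OF False I]] .
    qed
    then show ?thesis using False by (subst antipode_r.simps) (simp add: finite_supp_neg)
  qed
qed

lemma ideals_remove: "x \<in> ideals f \<Longrightarrow> {I. is_ideal f I \<and> I \<noteq> x} = ideals f - {x}"
  by auto

lemma antipode_l_left:
  assumes ef: "is_endo f"
  shows "(\<Sum>I\<in>ideals f. vprod (antipode_l (lpart f I)) (bvec (abs_endo (rpart f I))) y) = of_bool (f = []) * (efone y :: 'k::field)"
proof (cases "f = []")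
  case True
  have "(\<Sum>I\<in>ideals f. vprod (antipode_l (lpart f I)) (bvec (abs_endo (rpart f I))) y) = vprod (antipode_l [] :: endo \<Rightarrow> 'k) efone y"
    using True by (simp add: ideals_Nil stdr_empty efone_def)
  also have "\<dots> = efone y" by (simp add: antipode_l.simps efone_def vprod_bvec)
  finally show ?thesis using True by simp
next
  case False
  let ?g = "\<lambda>I. vprod (antipode_l (lpart f I) :: endo \<Rightarrow> 'k) (bvec (abs_endo (rpart f I))) y"
  have "(\<Sum>I\<in>ideals f. ?g I) = ?g {} + (\<Sum>I\<in>ideals f - {{}}. ?g I)"
    by (rule sum.remove[OF finite_ideals]) (simp only: mem_Collect_eq ideal_empty)
  also have "?g {} = antipode_l f y"
  proof -
    have "?g {} = vprod (antipode_l f :: endo \<Rightarrow> 'k) efone y" by (simp only: lpart_empty[OF ef] rpart_empty efone_def)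
    also have "vprod (antipode_l f :: endo \<Rightarrow> 'k) efone = antipode_l f" by (rule vprod_one_right[OF finite_supp_antipode_l])
    finally show ?thesis .
  qed
  also have "antipode_l f y = - (\<Sum>I\<in>ideals f - {{}}. ?g I)"
    using False ideals_remove[of "{}" f] ideal_empty by (subst antipode_l.simps) simp
  finally show ?thesis using False by simp
qed

lemma antipode_r_right:
  assumes ef: "is_endo f"
  shows "(\<Sum>I\<in>ideals f. vprod (bvec (abs_endo (lpart f I))) (antipode_r (rpart f I)) y) = of_bool (f = []) * (efone y :: 'k::field)"
proof (cases "f = []")
  case True
  have "(\<Sum>I\<in>ideals f. vprod (bvec (abs_endo (lpart f I))) (antipode_r (rpart f I)) y) = vprod efone (antipode_r [] :: endo \<Rightarrow> 'k) y"
    using True by (simp add: ideals_Nil stdr_empty efone_def)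
  also have "\<dots> = efone y" by (simp add: antipode_r.simps efone_def vprod_bvec)
  finally show ?thesis using True by simp
next
  case False
  let ?g = "\<lambda>I. vprod (bvec (abs_endo (lpart f I))) (antipode_r (rpart f I) :: endo \<Rightarrow> 'k) y"
  have "(\<Sum>I\<in>ideals f. ?g I) = ?g (dom_endo f) + (\<Sum>I\<in>ideals f - {dom_endo f}. ?g I)"
    by (rule sum.remove[OF finite_ideals]) (simp only: mem_Collect_eq ideal_full)
  also have "?g (dom_endo f) = antipode_r f y"
  proof -
    have "?g (dom_endo f) = vprod efone (antipode_r f :: endo \<Rightarrow> 'k) y" by (simp only: lpart_full rpart_full[OF ef] efone_def)
    also have "vprod efone (antipode_r f :: endo \<Rightarrow> 'k) = antipode_r f" by (rule vprod_one_left[OF finite_supp_antipode_r])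
    finally show ?thesis .
  qed
  also have "antipode_r f y = - (\<Sum>I\<in>ideals f - {dom_endo f}. ?g I)"
    using False ideals_remove[of "dom_endo f" f] ideal_full by (subst antipode_r.simps) simp
  finally show ?thesis using False by simp
qed

lemma vprod_scale_right:
  fixes u v :: "endo \<Rightarrow> 'k::field"
  assumes "finite (supp u)" "finite (supp v)"
  shows "vprod u (\<lambda>z. c * v z) y = c * vprod u v y"
  using vprod_lin_right[of "{()}" "\<lambda>_. v" u "\<lambda>_. c" y] assms by simp

lemma vprod_scale_left:
  fixes u v :: "endo \<Rightarrow> 'k::field"
  assumes "finite (supp u)" "finite (supp v)"
  shows "vprod (\<lambda>z. c * u z) v y = c * vprod u v y"
  using vprod_lin_left[of "{()}" "\<lambda>_. u" v "\<lambda>_. c" y] assms by simp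

text \<open>The two ways of evaluating S_l * id * S_r on the terms of a splitting: the inner sums
  collapse by the defining recursions.\<close>
lemma collapse_right_recursion:
  assumes I: "is_ideal f I"
  shows "(\<Sum>J\<in>ideals (rpart f I). vprod (vprod (antipode_l (lpart f I) :: endo \<Rightarrow> 'k::field)
      (bvec (abs_endo (lpart (rpart f I) J)))) (antipode_r (rpart (rpart f I) J)) y) =
    of_bool (I = {}) * antipode_l (lpart f I) y"
proof -
  note fb = finite_supp_bvec and fl = finite_supp_antipode_l and fr = finite_supp_antipode_r
  have "(\<Sum>J\<in>ideals (rpart f I). vprod (vprod (antipode_l (lpart f I))
      (bvec (abs_endo (lpart (rpart f I) J)))) (antipode_r (rpart (rpart f I) J)) y) =
    (\<Sum>J\<in>ideals (rpart f I). vprod (antipode_l (lpart f I))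
      (vprod (bvec (abs_endo (lpart (rpart f I) J))) (antipode_r (rpart (rpart f I) J))) y)"
    by (simp add: vprod_assoc[OF fl fb fr])
  also have "\<dots> = vprod (antipode_l (lpart f I)) (\<lambda>z. \<Sum>J\<in>ideals (rpart f I).
      vprod (bvec (abs_endo (lpart (rpart f I) J))) (antipode_r (rpart (rpart f I) J)) z) y"
    by (rule vprod_sum_right[symmetric]) (use finite_ideals finite_supp_vprod[OF fb fr] fl in auto)
  also have "(\<lambda>z. \<Sum>J\<in>ideals (rpart f I). vprod (bvec (abs_endo (lpart (rpart f I) J)))
      (antipode_r (rpart (rpart f I) J) :: endo \<Rightarrow> 'k) z) = (\<lambda>z. of_bool (rpart f I = []) * efone z)"
    using antipode_r_right[OF endo_rpart[OF I]] by blast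
  also have "vprod (antipode_l (lpart f I) :: endo \<Rightarrow> 'k) (\<lambda>z. of_bool (rpart f I = []) * efone z) y
      = of_bool (rpart f I = []) * vprod (antipode_l (lpart f I)) efone y"
    by (rule vprod_scale_right[OF fl]) (simp add: efone_def finite_supp_bvec)
  also have "\<dots> = of_bool (I = {}) * antipode_l (lpart f I) y"
    by (simp add: rpart_Nil_iff[OF I] vprod_one_right[OF fl])
  finally show ?thesis .
qed

lemma collapse_left_recursion:
  assumes I: "is_ideal f I"
  shows "(\<Sum>J\<in>ideals (lpart f I). vprod (vprod (antipode_l (lpart (lpart f I) J) :: endo \<Rightarrow> 'k::field)
      (bvec (abs_endo (rpart (lpart f I) J)))) (antipode_r (rpart f I)) y) =
    of_bool (I = dom_endo f) * antipode_r (rpart f I) y"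
proof -
  note fb = finite_supp_bvec and fl = finite_supp_antipode_l and fr = finite_supp_antipode_r
  have "(\<Sum>J\<in>ideals (lpart f I). vprod (vprod (antipode_l (lpart (lpart f I) J))
      (bvec (abs_endo (rpart (lpart f I) J)))) (antipode_r (rpart f I)) y) =
    vprod (\<lambda>z. \<Sum>J\<in>ideals (lpart f I). vprod (antipode_l (lpart (lpart f I) J))
      (bvec (abs_endo (rpart (lpart f I) J))) z) (antipode_r (rpart f I)) y"
    by (rule vprod_sum_left[symmetric]) (use finite_ideals finite_supp_vprod[OF fl fb] fr in auto)
  also have "(\<lambda>z. \<Sum>J\<in>ideals (lpart f I). vprod (antipode_l (lpart (lpart f I) J) :: endo \<Rightarrow> 'k)
      (bvec (abs_endo (rpart (lpart f I) J))) z) = (\<lambda>z. of_bool (lpart f I = []) * efone z)"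
    using antipode_l_left[OF endo_lpart] by blast
  also have "vprod (\<lambda>z. of_bool (lpart f I = []) * efone z) (antipode_r (rpart f I) :: endo \<Rightarrow> 'k) y
      = of_bool (lpart f I = []) * vprod efone (antipode_r (rpart f I)) y"
    by (rule vprod_scale_left[OF _ fr]) (simp add: efone_def finite_supp_bvec)
  also have "\<dots> = of_bool (I = dom_endo f) * antipode_r (rpart f I) y"
    by (simp add: lpart_Nil_iff[OF I] vprod_one_left[OF fr] del: One_nat_def)
  finally show ?thesis .
qed

text \<open>Both recursions define the same map: S_l = S_l * id * S_r = S_r, the middle expression
  being expanded along the two iterated splittings, which agree by coassociativity.\<close>
lemma antipode_l_antipode_r:
  assumes ef: "is_endo f"
  shows "antipode_l f = (antipode_r f :: endo \<Rightarrow> 'k::field)"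
proof
  fix y
  define F where "F p q r = vprod (vprod (antipode_l p :: endo \<Rightarrow> 'k) (bvec (abs_endo q))) (antipode_r r) y"
    for p q r
  have "antipode_l f y = (\<Sum>I\<in>ideals f. of_bool (I = {}) * (antipode_l (lpart f I) y :: 'k))"
    by (simp only: sum_ideal_delta[OF ideal_empty] lpart_empty[OF ef])
  also have "\<dots> = (\<Sum>I\<in>ideals f. \<Sum>J\<in>ideals (rpart f I).
      F (lpart f I) (lpart (rpart f I) J) (rpart (rpart f I) J))"
    unfolding F_def by (rule sum.cong[OF refl]) (simp add: collapse_right_recursion del: One_nat_def)
  also have "\<dots> = (\<Sum>I\<in>ideals f. \<Sum>J\<in>ideals (lpart f I).
      F (lpart (lpart f I) J) (rpart (lpart f I) J) (rpart f I))"
    by (rule coassoc_sum[symmetric])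
  also have "\<dots> = (\<Sum>I\<in>ideals f. of_bool (I = dom_endo f) * antipode_r (rpart f I) y)"
    unfolding F_def by (rule sum.cong[OF refl]) (simp add: collapse_left_recursion del: One_nat_def)
  also have "\<dots> = antipode_r f y"
    by (simp only: sum_ideal_delta[OF ideal_full] rpart_full[OF ef])
  finally show "antipode_l f y = (antipode_r f y :: 'k)" .
qed

definition antipode :: "endo \<Rightarrow> endo \<Rightarrow> 'k::field" where
  "antipode x = antipode_l (rep_endo x)"

lemma ax_antipode:
  "lext efmu (lext (tmat antipode bvec) (efDelta x)) = (\<lambda>y. efone x * (efone y :: 'k::field)) \<and>
   lext efmu (lext (tmat bvec antipode) (efDelta x)) = (\<lambda>y. efone x * (efone y :: 'k))"
proof (intro conjI ext)
  fix y
  let ?f = "rep_endo x"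
  have ef: "is_endo ?f" by (rule endo_rep)
  have fb: "\<And>a. finite (supp (bvec a :: endo \<Rightarrow> 'k))" by (rule finite_supp_bvec)
  have fl: "\<And>g. finite (supp (antipode_l g :: endo \<Rightarrow> 'k))" by (rule finite_supp_antipode_l)
  have ex: "(efone x :: 'k) = of_bool (?f = [])" by (simp add: efone_apply rep_eq_Nil)
  have t: "lext (tmat antipode bvec) (efDelta x) = (\<lambda>p. \<Sum>I\<in>ideals ?f. tens (antipode_l (lpart ?f I) :: endo \<Rightarrow> 'k) (bvec (abs_endo (rpart ?f I))) p)"
    by (rule ext) (simp add: efDelta_eq lext_coprod tmat_def antipode_def rep_abs endo_stdr)
  have "lext efmu (lext (tmat antipode bvec) (efDelta x)) y
      = (\<Sum>I\<in>ideals ?f. lext efmu (tens (antipode_l (lpart ?f I) :: endo \<Rightarrow> 'k) (bvec (abs_endo (rpart ?f I)))) y)"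
    unfolding t by (rule lext_sum[OF finite_ideals finite_supp_tens[OF fl fb]])
  also have "\<dots> = (\<Sum>I\<in>ideals ?f. vprod (antipode_l (lpart ?f I) :: endo \<Rightarrow> 'k) (bvec (abs_endo (rpart ?f I))) y)"
    by (simp add: vprod_def)
  also have "\<dots> = of_bool (?f = []) * efone y" by (rule antipode_l_left[OF ef])
  also have "\<dots> = efone x * efone y" using ex by simp
  finally show "lext efmu (lext (tmat antipode bvec) (efDelta x)) y = efone x * (efone y :: 'k)" .
next
  fix y
  let ?f = "rep_endo x"
  have ef: "is_endo ?f" by (rule endo_rep)
  have fb: "\<And>a. finite (supp (bvec a :: endo \<Rightarrow> 'k))" by (rule finite_supp_bvec)
  have fl: "\<And>g. finite (supp (antipode_l g :: endo \<Rightarrow> 'k))" by (rule finite_supp_antipode_l)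
  have ex: "(efone x :: 'k) = of_bool (?f = [])" by (simp add: efone_apply rep_eq_Nil)
  have t: "lext (tmat bvec antipode) (efDelta x) = (\<lambda>p. \<Sum>I\<in>ideals ?f. tens (bvec (abs_endo (lpart ?f I))) (antipode_l (rpart ?f I) :: endo \<Rightarrow> 'k) p)"
  proof (rule ext)
    fix p
    show "lext (tmat bvec antipode) (efDelta x) p = (\<Sum>I\<in>ideals ?f. tens (bvec (abs_endo (lpart ?f I))) (antipode_l (rpart ?f I) :: endo \<Rightarrow> 'k) p)"
      unfolding efDelta_eq lext_coprod
      by (rule sum.cong[OF refl]) (simp add: tmat_def antipode_def rep_abs endo_rpart)
  qed
  have "lext efmu (lext (tmat bvec antipode) (efDelta x)) y
      = (\<Sum>I\<in>ideals ?f. lext efmu (tens (bvec (abs_endo (lpart ?f I))) (antipode_l (rpart ?f I) :: endo \<Rightarrow> 'k)) y)"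
    unfolding t by (rule lext_sum[OF finite_ideals finite_supp_tens[OF fb fl]])
  also have "\<dots> = (\<Sum>I\<in>ideals ?f. vprod (bvec (abs_endo (lpart ?f I))) (antipode_r (rpart ?f I) :: endo \<Rightarrow> 'k) y)"
    by (rule sum.cong[OF refl]) (simp add: vprod_def antipode_l_antipode_r endo_rpart)
  also have "\<dots> = of_bool (?f = []) * efone y" by (rule antipode_r_right[OF ef])
  also have "\<dots> = efone x * efone y" using ex by simp
  finally show "lext efmu (lext (tmat bvec antipode) (efDelta x)) y = efone x * (efone y :: 'k)" .
qed

theorem hopf_main: "hopf_sc efmu (efone :: endo \<Rightarrow> 'k::field) efDelta efone antipode"
proof -
  have "finite (supp (efone :: endo \<Rightarrow> 'k))" by (simp add: efone_def finite_supp_bvec)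
  moreover have "finite (supp (efDelta x :: endo \<times> endo \<Rightarrow> 'k))" for x
    by (simp add: efDelta_eq finite_supp_coprod)
  moreover have "finite (supp (antipode x :: endo \<Rightarrow> 'k))" for x
    by (simp add: antipode_def finite_supp_antipode_l)
  ultimately show ?thesis
    unfolding hopf_sc_def
    using finite_supp_efmu ax_assoc ax_unit ax_coassoc ax_counit ax_mult ax_Delta_one ax_eps_mult
      ax_eps_one ax_antipode
    by blast
qed

text \<open>For the constant map f = [1,1,1], the ideal {2,3} splits f into [1] \<otimes> [1,2], while no
  ideal splits it into [1,2] \<otimes> [1]: every ideal containing 1 is all of [3].\<close>

lemma std_111_examples:
  "stdr [1,1,1] {2,3} = [1,2]" "stdr [1,1,1] ({1..length [1,1,1::nat]} - {2,3}) = [1]"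
  "stdr [1,1,1] ({1..length [1,1,1::nat]} - {2}) = [1,1]"
  "stdr [1,1,1] ({1..length [1,1,1::nat]} - {3}) = [1,1]"
  by code_simp+

lemma dom_111: "{1..length [1,1,1::nat]} = {1,2,3}" by code_simp

lemma ideal_111_23: "is_ideal [1,1,1] {2,3}" by code_simp

lemma ideal_111_full:
  assumes "is_ideal [1,1,1] I" "1 \<in> I"
  shows "I = {1,2,3}"
proof -
  have s: "I \<subseteq> {1,2,3}" using ideal_sub[OF assms(1)] by auto
  have a: "\<forall>j\<in>{1..3}. ap [1,1,1] j = 1" by (auto simp: ap_def nth_Cons split: nat.split)
  have "\<forall>j\<in>{1..3::nat}. j \<in> I" using assms a unfolding is_ideal_def by auto
  then have "{1,2,3} \<subseteq> I" by auto
  then show ?thesis using s by auto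
qed

lemma ideal_111_without_1: "is_ideal [1,1,1] I \<Longrightarrow> card I < 3 \<Longrightarrow> I \<subseteq> {2,3}"
  using ideal_111_full ideal_sub[of "[1,1,1]" I] unfolding dom_111 by fastforce

lemma split_111_forward:
  "{I. is_ideal [1,1,1] I \<and> stdr [1,1,1] ({1..length [1,1,1::nat]} - I) = [1] \<and>
      stdr [1,1,1] I = [1,2]} = {{2,3}}"
proof
  show "{{2,3}} \<subseteq> {I. is_ideal [1,1,1] I \<and> stdr [1,1,1] ({1..length [1,1,1::nat]} - I) = [1] \<and>
      stdr [1,1,1] I = [1,2]}"
    using std_111_examples(1,2) ideal_111_23 by simp
next
  show "{I. is_ideal [1,1,1] I \<and> stdr [1,1,1] ({1..length [1,1,1::nat]} - I) = [1] \<and>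
      stdr [1,1,1] I = [1,2]} \<subseteq> {{2,3}}"
  proof clarify
    fix I assume I: "is_ideal [1,1,1] I" "stdr [1,1,1] I = [1,2]"
    have c: "card I = 2" using length_rpart[OF I(1)] I(2) by simp
    then have "I \<subseteq> {2,3}" using ideal_111_without_1[OF I(1)] by simp
    then show "I = {2,3}" using card_subset_eq[of "{2,3}" I] c by simp
  qed
qed

lemma split_111_backward:
  "{I. is_ideal [1,1,1] I \<and> stdr [1,1,1] ({1..length [1,1,1::nat]} - I) = [1,2] \<and>
      stdr [1,1,1] I = [1]} = {}"
proof -
  have False if I: "is_ideal [1,1,1] I" "stdr [1,1,1] ({1..length [1,1,1::nat]} - I) = [1,2]"
    "stdr [1,1,1] I = [1]" for I
  proof -
    have c: "card I = 1" using length_rpart[OF I(1)] I(3) by simp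
    then have "I \<subseteq> {2,3}" using ideal_111_without_1[OF I(1)] by simp
    moreover obtain x where x: "I = {x}" using c card_1_singletonE by blast
    ultimately have "x = 2 \<or> x = 3" by auto
    then show False using I(2) x std_111_examples(3,4) by auto
  qed
  then show ?thesis by blast
qed

lemma endo_examples: "is_endo [1]" "is_endo [1,2]" "is_endo [1,1,1]" by code_simp+

lemma noncocomm: "\<exists>x. (efDelta x :: endo \<times> endo \<Rightarrow> 'k::field) \<noteq> (\<lambda>(a, b). efDelta x (b, a))"
proof
  let ?x = "abs_endo [1,1,1]"
  have r: "rep_endo (abs_endo [1]) = [1]" "rep_endo (abs_endo [1,2]) = [1,2]" "rep_endo ?x = [1,1,1]"
    using rep_abs endo_examples by auto
  have d1: "(efDelta ?x (abs_endo [1], abs_endo [1,2]) :: 'k) = 1"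
    unfolding efDelta_def using r split_111_forward by simp
  have d2: "(efDelta ?x (abs_endo [1,2], abs_endo [1]) :: 'k) = 0"
    by (simp only: efDelta_def prod.case r split_111_backward card.empty of_nat_0)
  show "(efDelta ?x :: endo \<times> endo \<Rightarrow> 'k) \<noteq> (\<lambda>(a, b). efDelta ?x (b, a))"
  proof
    assume "(efDelta ?x :: endo \<times> endo \<Rightarrow> 'k) = (\<lambda>(a, b). efDelta ?x (b, a))"
    then have "(efDelta ?x (abs_endo [1,2], abs_endo [1]) :: 'k) = efDelta ?x (abs_endo [1], abs_endo [1,2])"
      by (metis (mono_tags, lifting) case_prod_conv)
    then show False using d1 d2 by simp
  qed
qed

theorem mainTheorem12:
  shows "(\<forall>(F :: nat list set) (c :: nat list \<Rightarrow> 'k::field). finite F \<longrightarrow> (\<forall>f\<in>F. is_endo f) \<longrightarrow>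
            (\<forall>w. (\<Sum>f\<in>F. c f * SA f w) = 0) \<longrightarrow> (\<forall>f\<in>F. c f = 0))
    \<and> (\<forall>f g. is_endo f \<longrightarrow> is_endo g \<longrightarrow>
            series_mult (SA f) (SA g) = (SA (shcat f g) :: letter list \<Rightarrow> 'k))
    \<and> (SA [] :: letter list \<Rightarrow> 'k) = series_one
    \<and> (\<forall>F G. F \<in> (EFSym :: (letter list \<Rightarrow> 'k) set) \<longrightarrow> G \<in> EFSym \<longrightarrow> series_mult F G \<in> EFSym)
    \<and> (series_one :: letter list \<Rightarrow> 'k) \<in> EFSym
    \<and> (\<forall>f u v. is_endo f \<longrightarrow>
            (\<Sum>w\<in>shuffles (map Inl u) (map Inr v). (SAB f w :: 'k)) =
            (\<Sum>I\<in>{I. is_ideal f I}. SA (stdr f ({1..length f} - I)) u * SA (stdr f I) v))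
    \<and> (\<exists>(eps :: endo \<Rightarrow> 'k) S. hopf_sc efmu efone efDelta eps S \<and>
            graded_sc efdeg efmu efone efDelta eps)
    \<and> (\<exists>x. (efDelta x :: endo \<times> endo \<Rightarrow> 'k) \<noteq> (\<lambda>(a, b). efDelta x (b, a)))"
proof (intro conjI)
  show "\<forall>(F :: nat list set) (c :: nat list \<Rightarrow> 'k::field). finite F \<longrightarrow> (\<forall>f\<in>F. is_endo f) \<longrightarrow>
            (\<forall>w. (\<Sum>f\<in>F. c f * SA f w) = 0) \<longrightarrow> (\<forall>f\<in>F. c f = 0)"
    using lin_indep by blast
  show "\<forall>f g. is_endo f \<longrightarrow> is_endo g \<longrightarrow>
            series_mult (SA f) (SA g) = (SA (shcat f g) :: letter list \<Rightarrow> 'k)"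
    by (intro allI impI) (rule series_mult_SA)
  show "(SA [] :: letter list \<Rightarrow> 'k) = series_one" by (rule SA_Nil)
  show "\<forall>F G. F \<in> (EFSym :: (letter list \<Rightarrow> 'k) set) \<longrightarrow> G \<in> EFSym \<longrightarrow> series_mult F G \<in> EFSym"
    by (intro allI impI) (rule EFSym_mult)
  show "(series_one :: letter list \<Rightarrow> 'k) \<in> EFSym" by (rule series_one_EFSym)
  show "\<forall>f u v. is_endo f \<longrightarrow>
            (\<Sum>w\<in>shuffles (map Inl u) (map Inr v). (SAB f w :: 'k)) =
            (\<Sum>I\<in>{I. is_ideal f I}. SA (stdr f ({1..length f} - I)) u * SA (stdr f I) v)"
    by (intro allI impI) (rule shuffle_formula)
  show "\<exists>(eps :: endo \<Rightarrow> 'k) S. hopf_sc efmu efone efDelta eps S \<and>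
            graded_sc efdeg efmu efone efDelta eps"
    using hopf_main graded by blast
  show "\<exists>x. (efDelta x :: endo \<times> endo \<Rightarrow> 'k) \<noteq> (\<lambda>(a, b). efDelta x (b, a))"
    by (rule noncocomm)
qed

end
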